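(* Let $(\alpha_j)_{j\ge0}$ be a deterministic sequence in the open unit disc with only finitely many nonzero terms, and set $\alpha_{-1}:=-1$. Let $\rho_j=(1-|\alpha_j|^2)^{1/2}$, $\Theta_j=\begin{pmatrix}\alpha_j&\rho_j\\ \rho_j&-\overline{\alpha_j}\end{pmatrix}$, $\mathcal{L}=\mathrm{Diag}(\Theta_0,\Theta_2,\dots)$, $\mathcal{M}=\mathrm{Diag}(1,\Theta_1,\Theta_3,\dots)$ and $\mathcal{C}=\mathcal{L}\mathcal{M}$ (infinite matrices indexed by positive integers). Then for every $k\ge2$, $$\mathrm{tr}(\mathcal{C}^k) = -k\sum_{j\ge-1}\overline{\alpha_j}\,\rho_{j+1}^2\rho_{j+2}^2\cdots\rho_{j+k-1}^2\,\alpha_{j+k} + O\Big(k^3\sum_{j\ge-1}|\alpha_j|^3\Big),$$ where the implicit constant in $O$ is absolute.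
   Context: With finitely many nonzero $\alpha_j$, $\mathcal{C}^k$ has only finitely many nonzero diagonal entries, so the trace is a finite sum. *)

theory Defs
  imports "HOL-Analysis.Analysis"
begin

text \<open>Infinite matrices are functions nat \<Rightarrow> nat \<Rightarrow> complex indexed by positive
  integers; row/column 0 is unused and identically zero.\<close>

definition rho :: "complex \<Rightarrow> real" where
  "rho a = sqrt (1 - (cmod a)^2)"

definition theta :: "complex \<Rightarrow> nat \<Rightarrow> nat \<Rightarrow> complex" where
  "theta a r s =
     (if r = 0 \<and> s = 0 then a
      else if r = 1 \<and> s = 1 then - cnj a
      else complex_of_real (rho a))"

text \<open>L = Diag(Theta_0, Theta_2, ...): block b occupies rows/cols 2b+1, 2b+2.\<close>
definition cmvL :: "(nat \<Rightarrow> complex) \<Rightarrow> nat \<Rightarrow> nat \<Rightarrow> complex" where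
  "cmvL \<alpha> i j =
     (if 1 \<le> i \<and> 1 \<le> j \<and> (i - 1) div 2 = (j - 1) div 2
      then theta (\<alpha> (2 * ((i - 1) div 2))) ((i - 1) mod 2) ((j - 1) mod 2)
      else 0)"

text \<open>M = Diag(1, Theta_1, Theta_3, ...): block m \<ge> 1 occupies rows/cols 2m, 2m+1.\<close>
definition cmvM :: "(nat \<Rightarrow> complex) \<Rightarrow> nat \<Rightarrow> nat \<Rightarrow> complex" where
  "cmvM \<alpha> i j =
     (if i = 1 \<and> j = 1 then 1
      else if 2 \<le> i \<and> 2 \<le> j \<and> i div 2 = j div 2
      then theta (\<alpha> (2 * (i div 2) - 1)) (i mod 2) (j mod 2)
      else 0)"

definition mat_mult :: "(nat \<Rightarrow> nat \<Rightarrow> complex) \<Rightarrow> (nat \<Rightarrow> nat \<Rightarrow> complex) \<Rightarrow> nat \<Rightarrow> nat \<Rightarrow> complex" where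
  "mat_mult A B i j = (\<Sum>\<^sub>\<infinity> l. A i l * B l j)"

definition mat_id :: "nat \<Rightarrow> nat \<Rightarrow> complex" where
  "mat_id i j = (if i = j \<and> 1 \<le> i then 1 else 0)"

fun mat_pow :: "(nat \<Rightarrow> nat \<Rightarrow> complex) \<Rightarrow> nat \<Rightarrow> nat \<Rightarrow> nat \<Rightarrow> complex" where
  "mat_pow A 0 = mat_id"
| "mat_pow A (Suc n) = mat_mult A (mat_pow A n)"

definition mat_trace :: "(nat \<Rightarrow> nat \<Rightarrow> complex) \<Rightarrow> complex" where
  "mat_trace A = (\<Sum>\<^sub>\<infinity> i\<in>{1..}. A i i)"

definition cmv :: "(nat \<Rightarrow> complex) \<Rightarrow> nat \<Rightarrow> nat \<Rightarrow> complex" where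
  "cmv \<alpha> = mat_mult (cmvL \<alpha>) (cmvM \<alpha>)"

definition alpha_ext :: "(nat \<Rightarrow> complex) \<Rightarrow> int \<Rightarrow> complex" where
  "alpha_ext \<alpha> j = (if j = -1 then -1 else if j \<ge> 0 then \<alpha> (nat j) else 0)"

end

theory Submission
  imports Defs
begin

text \<open>
  Write C^k as the product G_{2k} \<cdots> G_1 of the factors G_s = L (s even) and G_s = M (s odd),
  all tridiagonal, and split G_s = A_s + D_s where A_s is the factor at \<alpha> = 0, a permutation
  matrix swapping neighbouring rows, and row x of D_s is of size |\<alpha>_{x-1}| + |\<alpha>_{x-2}|.
  Expanding the product to second order in D gives C^k = Q_0 + Q_1 + Q_2 + R.
  Beyond row 2k+2 free paths move every row by exactly 2k steps, so Q_0 and (by parity) Q_1 have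
  zero diagonal there, while the diagonal of Q_2 picks up exactly the products -conj(\<alpha>_j) \<alpha>_{j+k},
  each one k times in total. The G_s are contractions, so Duhamel's formula bounds the diagonal
  of R by triple products of D-entries along paths; AM-GM turns these into O(k^3 \<Sum> |\<alpha>_j|^3).
  The first 2k+2 rows contribute O(k^2), which the term \<alpha>_{-1} = -1 on the right absorbs, and
  replacing the products of \<rho>_j^2 in the main term by 1 costs O(k^2 \<Sum> |\<alpha>_j|^3).
\<close>

section \<open>Banded products and the CMV factors\<close>

definition band_mult :: "(nat\<Rightarrow>nat\<Rightarrow>complex) \<Rightarrow> (nat\<Rightarrow>nat\<Rightarrow>complex) \<Rightarrow> nat\<Rightarrow>nat\<Rightarrow>complex" where
  "band_mult F P x y = (\<Sum>l\<in>{x-1..x+1}. F x l * P l y)"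

definition cmv_factor :: "(nat\<Rightarrow>complex) \<Rightarrow> nat \<Rightarrow> nat\<Rightarrow>nat\<Rightarrow>complex" where
  "cmv_factor \<alpha> s = (if even s then cmvL \<alpha> else cmvM \<alpha>)"

fun cmv_partial :: "(nat\<Rightarrow>complex) \<Rightarrow> nat \<Rightarrow> nat\<Rightarrow>nat\<Rightarrow>complex" where
  "cmv_partial \<alpha> 0 = mat_id"
| "cmv_partial \<alpha> (Suc s) = band_mult (cmv_factor \<alpha> (Suc s)) (cmv_partial \<alpha> s)"

lemma cmvL_band: "cmvL \<alpha> x l \<noteq> 0 \<Longrightarrow> l \<in> {x-1..x+1} \<and> 1 \<le> x"
  unfolding cmvL_def by (auto split: if_splits)

lemma cmvM_band: "cmvM \<alpha> x l \<noteq> 0 \<Longrightarrow> l \<in> {x-1..x+1} \<and> 1 \<le> x"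
  unfolding cmvM_def by (auto split: if_splits)

lemma cmv_factor_band: "cmv_factor \<alpha> s x l \<noteq> 0 \<Longrightarrow> l \<in> {x-1..x+1} \<and> 1 \<le> x"
  unfolding cmv_factor_def using cmvL_band cmvM_band by (auto split: if_splits)

lemma infsum_eq_finite_sum:
  assumes "finite S" "\<And>l. l \<notin> S \<Longrightarrow> f l = 0"
  shows "(\<Sum>\<^sub>\<infinity> l. f l) = (\<Sum>l\<in>S. f l)"
proof -
  have "(\<Sum>\<^sub>\<infinity> l. f l) = (\<Sum>\<^sub>\<infinity> l\<in>S. f l)"
    by (rule infsum_cong_neutral) (use assms in auto)
  thus ?thesis using assms by simp
qed

lemma mat_mult_eq_band_mult:
  assumes "\<And>l. F x l \<noteq> 0 \<Longrightarrow> l \<in> {x-1..x+1}"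
  shows "mat_mult F P x y = band_mult F P x y"
  unfolding mat_mult_def band_mult_def
  by (rule infsum_eq_finite_sum) (use assms in auto)

lemma cmv_eq_sum: "cmv \<alpha> x l = (\<Sum>m\<in>{x-1..x+1}. cmvL \<alpha> x m * cmvM \<alpha> m l)"
  unfolding cmv_def by (rule mat_mult_eq_band_mult[unfolded band_mult_def]) (use cmvL_band in blast)

lemma cmv_band: "cmv \<alpha> x l \<noteq> 0 \<Longrightarrow> l \<in> {x-2..x+2}"
proof -
  assume "cmv \<alpha> x l \<noteq> 0"
  then obtain m where "m \<in> {x-1..x+1}" "cmvM \<alpha> m l \<noteq> 0"
    unfolding cmv_eq_sum by (metis (no_types, lifting) mult_zero_right sum.neutral)
  then show ?thesis using cmvM_band[of \<alpha> m l] by auto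
qed

lemma mat_mult_cmv: "mat_mult (cmv \<alpha>) P x y = band_mult (cmvL \<alpha>) (band_mult (cmvM \<alpha>) P) x y"
proof -
  have "mat_mult (cmv \<alpha>) P x y = (\<Sum>l\<in>{x-2..x+2}. cmv \<alpha> x l * P l y)"
    unfolding mat_mult_def by (rule infsum_eq_finite_sum) (use cmv_band in auto)
  also have "\<dots> = (\<Sum>l\<in>{x-2..x+2}. \<Sum>m\<in>{x-1..x+1}. cmvL \<alpha> x m * cmvM \<alpha> m l * P l y)"
    by (simp only: cmv_eq_sum sum_distrib_right)
  also have "\<dots> = (\<Sum>m\<in>{x-1..x+1}. \<Sum>l\<in>{x-2..x+2}. cmvL \<alpha> x m * cmvM \<alpha> m l * P l y)"
    by (rule sum.swap)
  also have "\<dots> = (\<Sum>m\<in>{x-1..x+1}. \<Sum>l\<in>{m-1..m+1}. cmvL \<alpha> x m * cmvM \<alpha> m l * P l y)"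
  proof (rule sum.cong[OF refl])
    fix m assume m: "m \<in> {x-1..x+1}"
    show "(\<Sum>l\<in>{x-2..x+2}. cmvL \<alpha> x m * cmvM \<alpha> m l * P l y) = (\<Sum>l\<in>{m-1..m+1}. cmvL \<alpha> x m * cmvM \<alpha> m l * P l y)"
      by (rule sum.mono_neutral_right) (use m cmvM_band[of \<alpha> m] in force)+
  qed
  finally show ?thesis unfolding band_mult_def by (simp only: sum_distrib_left mult.assoc)
qed

lemma mat_pow_cmv_eq_partial: "mat_pow (cmv \<alpha>) n = cmv_partial \<alpha> (2*n)"
proof (induction n)
  case 0 then show ?case by simp
next
  case (Suc n)
  have "mat_pow (cmv \<alpha>) (Suc n) = mat_mult (cmv \<alpha>) (cmv_partial \<alpha> (2*n))" using Suc by simp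
  also have "\<dots> = cmv_partial \<alpha> (2 * Suc n)"
    by (rule ext, rule ext) (simp add: mat_mult_cmv cmv_factor_def)
  finally show ?case .
qed

text \<open>Row x of factor s is nonzero only in column x and in column partner s x, and the 2 \<times> 2
  block through row x carries the coefficient block_coeff \<alpha> s x. Row 0 is unused and row 1 of M
  is the isolated entry 1, so both are fixed by partner.\<close>

definition partner :: "nat \<Rightarrow> nat \<Rightarrow> nat" where
  "partner s x = (if x = 0 then 0 else if x = 1 \<and> odd s then 1 else if odd (x+s) then x+1 else x-1)"

definition block_coeff :: "(nat\<Rightarrow>complex) \<Rightarrow> nat \<Rightarrow> nat \<Rightarrow> complex" where
  "block_coeff \<alpha> s x = (if odd (x+s) then \<alpha> (x-1) else \<alpha> (x-2))"

lemma cmvL_odd: "cmvL \<alpha> (2*b+1) l = (if l = 2*b+1 then \<alpha> (2*b) else if l = 2*b+2 then of_real (rho (\<alpha> (2*b))) else 0)"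
proof -
  have "(1 \<le> l \<and> b = (l - 1) div 2) \<longleftrightarrow> (l = 2*b+1 \<or> l = 2*b+2)" by presburger
  moreover have "l = 2*b+2 \<Longrightarrow> (l-1) mod 2 = 1" by presburger
  ultimately show ?thesis unfolding cmvL_def theta_def by auto
qed

lemma cmvL_even: "cmvL \<alpha> (2*b+2) l = (if l = 2*b+2 then - cnj (\<alpha> (2*b)) else if l = 2*b+1 then of_real (rho (\<alpha> (2*b))) else 0)"
proof -
  have "(1 \<le> l \<and> b = (l - 1) div 2) \<longleftrightarrow> (l = 2*b+1 \<or> l = 2*b+2)" by presburger
  moreover have "(2*b+2-1) div 2 = b" "(2*b+2-1) mod 2 = 1" by presburger+
  moreover have "l = 2*b+2 \<Longrightarrow> (l-1) mod 2 = 1" by presburger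
  ultimately show ?thesis unfolding cmvL_def theta_def by auto
qed

lemma cmvM_one: "cmvM \<alpha> 1 l = (if l = 1 then 1 else 0)"
  unfolding cmvM_def by auto

lemma cmvM_even: "1 \<le> m \<Longrightarrow> cmvM \<alpha> (2*m) l = (if l = 2*m then \<alpha> (2*m-1) else if l = 2*m+1 then of_real (rho (\<alpha> (2*m-1))) else 0)"
proof -
  assume m: "1 \<le> m"
  have "(2 \<le> l \<and> m = l div 2) \<longleftrightarrow> (l = 2*m \<or> l = 2*m+1)" using m by presburger
  moreover have "l = 2*m+1 \<Longrightarrow> l mod 2 = 1" by presburger
  ultimately show ?thesis using m unfolding cmvM_def theta_def by auto
qed

lemma cmvM_odd: "1 \<le> m \<Longrightarrow> cmvM \<alpha> (2*m+1) l = (if l = 2*m+1 then - cnj (\<alpha> (2*m-1)) else if l = 2*m then of_real (rho (\<alpha> (2*m-1))) else 0)"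
proof -
  assume m: "1 \<le> m"
  have "(2 \<le> l \<and> m = l div 2) \<longleftrightarrow> (l = 2*m \<or> l = 2*m+1)" using m by presburger
  moreover have "l = 2*m+1 \<Longrightarrow> l mod 2 = 1" by presburger
  moreover have "(2*m+1) div 2 = m" "(2*m+1) mod 2 = 1" by presburger+
  ultimately show ?thesis using m unfolding cmvM_def theta_def by auto
qed

lemma cmv_factor_entry:
  assumes "1 \<le> x" "\<not> (x = 1 \<and> odd s)"
  shows "cmv_factor \<alpha> s x l = (if l = x then (if odd (x+s) then block_coeff \<alpha> s x else - cnj (block_coeff \<alpha> s x))
           else if l = partner s x then of_real (rho (block_coeff \<alpha> s x)) else 0)"
proof (cases "even s")
  case True
  show ?thesis
  proof (cases "odd x")
    case True
    then obtain b where b: "x = 2*b+1" using oddE by blast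
    have g: "cmv_factor \<alpha> s = cmvL \<alpha>" using \<open>even s\<close> by (simp add: cmv_factor_def)
    show ?thesis using \<open>even s\<close> unfolding g b cmvL_odd by (auto simp: partner_def block_coeff_def)
  next
    case False
    have "x = 2*((x-2) div 2)+2" using False assms(1) by presburger
    then obtain b where b: "x = 2*b+2" by blast
    have g: "cmv_factor \<alpha> s = cmvL \<alpha>" using \<open>even s\<close> by (simp add: cmv_factor_def)
    show ?thesis using \<open>even s\<close> unfolding g b cmvL_even by (auto simp: partner_def block_coeff_def)
  qed
next
  case False
  show ?thesis
  proof (cases "even x")
    case True
    have "x = 2*(x div 2) \<and> 1 \<le> x div 2" using True assms(1) by presburger
    then obtain m where b: "x = 2*m" "1 \<le> m" by blast
    have g: "cmv_factor \<alpha> s = cmvM \<alpha>" using \<open>\<not> even s\<close> by (simp add: cmv_factor_def)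
    show ?thesis using \<open>\<not> even s\<close> b(2) unfolding g b cmvM_even[OF b(2)] by (auto simp: partner_def block_coeff_def)
  next
    case False
    have "x = 2*(x div 2)+1 \<and> 1 \<le> x div 2" using False assms \<open>\<not> even s\<close> by presburger
    then obtain m where b: "x = 2*m+1" "1 \<le> m" by blast
    have g: "cmv_factor \<alpha> s = cmvM \<alpha>" using \<open>\<not> even s\<close> by (simp add: cmv_factor_def)
    show ?thesis using \<open>\<not> even s\<close> b(2) unfolding g b cmvM_odd[OF b(2)] by (auto simp: partner_def block_coeff_def)
  qed
qed

lemma cmv_factor_row1: "odd s \<Longrightarrow> cmv_factor \<alpha> s 1 l = (if l = 1 then 1 else 0)"
  unfolding cmv_factor_def using cmvM_one by auto

lemma cmv_factor_row0: "cmv_factor \<alpha> s 0 l = 0"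
  by (meson cmv_factor_band not_one_le_zero)

lemma free_factor_entry: "cmv_factor (\<lambda>_. 0) s x l = (if 1 \<le> x \<and> l = partner s x then 1 else 0)"
proof -
  consider "x = 0" | "x = 1 \<and> odd s" | "1 \<le> x \<and> \<not> (x = 1 \<and> odd s)" by linarith
  then show ?thesis
  proof cases
    case 1 then show ?thesis using cmv_factor_row0 by simp
  next
    case 2 then show ?thesis using cmv_factor_row1[of s "\<lambda>_. 0"] by (auto simp: partner_def)
  next
    case 3
    have "partner s x \<noteq> x" using 3 unfolding partner_def by auto
    then show ?thesis using 3 cmv_factor_entry[of x s "\<lambda>_. 0" l] by (auto simp: block_coeff_def rho_def)
  qed
qed

section \<open>Contractivity\<close>

definition band_apply :: "(nat\<Rightarrow>nat\<Rightarrow>complex) \<Rightarrow> (nat\<Rightarrow>complex) \<Rightarrow> nat \<Rightarrow> complex" where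
  "band_apply F v x = (\<Sum>l\<in>{x-1..x+1}. F x l * v l)"

lemma band_mult_eq_band_apply: "band_mult F P x y = band_apply F (\<lambda>l. P l y) x"
  unfolding band_mult_def band_apply_def ..

lemma unitary_block_norm:
  "(\<rho>::real)^2 + (cmod a)^2 = 1 \<Longrightarrow> (cmod (a*u + \<rho>*w))^2 + (cmod (\<rho>*u - cnj a * w))^2 = (cmod u)^2 + (cmod w)^2"
  unfolding cmod_power2 by (simp add: algebra_simps power2_eq_square) algebra

lemma partner_neighbour: "1 \<le> x \<Longrightarrow> \<not> (x = 1 \<and> odd s) \<Longrightarrow> partner s x \<noteq> x \<and> partner s x \<in> {x-1..x+1} \<and> 1 \<le> partner s x"
  unfolding partner_def by auto

lemma sum_band_two:
  assumes "1 \<le> x" "\<not> (x = 1 \<and> odd s)" "\<And>l. l \<noteq> x \<Longrightarrow> l \<noteq> partner s x \<Longrightarrow> h l = 0"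
  shows "(\<Sum>l\<in>{x-1..x+1}. h l) = h x + h (partner s x)"
proof -
  have "(\<Sum>l\<in>{x-1..x+1}. h l) = (\<Sum>l\<in>{x, partner s x}. h l)"
    by (rule sum.mono_neutral_right) (use assms partner_neighbour[OF assms(1,2)] in auto)
  also have "\<dots> = h x + h (partner s x)" using partner_neighbour[OF assms(1,2)] by simp
  finally show ?thesis .
qed

lemma band_apply_factor:
  assumes "1 \<le> x" "\<not> (x = 1 \<and> odd s)"
  shows "band_apply (cmv_factor \<alpha> s) v x = (if odd (x+s) then block_coeff \<alpha> s x else - cnj (block_coeff \<alpha> s x)) * v x
                 + of_real (rho (block_coeff \<alpha> s x)) * v (partner s x)"
  unfolding band_apply_def
  by (subst sum_band_two[OF assms]) (use cmv_factor_entry[OF assms] partner_neighbour[OF assms] in auto)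

lemma band_apply_factor_row0: "band_apply (cmv_factor \<alpha> s) v 0 = 0"
  unfolding band_apply_def by (simp add: cmv_factor_row0)

lemma band_apply_factor_row1: "odd s \<Longrightarrow> band_apply (cmv_factor \<alpha> s) v 1 = v 1"
proof -
  assume "odd s"
  then have g: "\<And>l. cmv_factor \<alpha> s (Suc 0) l = (if l = Suc 0 then 1 else 0)" using cmv_factor_row1 by simp
  show ?thesis unfolding band_apply_def by (simp add: g)
qed

lemma rho_sq: "cmod a \<le> 1 \<Longrightarrow> (rho a)^2 = 1 - (cmod a)^2"
  unfolding rho_def by (simp add: abs_square_le_1)

lemma sum_lessThan_pairs_odd: fixes f :: "nat \<Rightarrow> 'a::comm_monoid_add" shows "(\<Sum>x<2*n+1. f x) = f 0 + (\<Sum>b<n. f (2*b+1) + f (2*b+2))"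
  by (induction n) (simp_all add: algebra_simps)

lemma sum_lessThan_pairs_even: fixes f :: "nat \<Rightarrow> 'a::comm_monoid_add" shows "(\<Sum>x<2*n+2. f x) = f 0 + f 1 + (\<Sum>b<n. f (2*b+2) + f (Suc (2*b+2)))"
  by (induction n) (simp_all add: algebra_simps)

lemma cmvL_column_contraction:
  assumes "\<forall>j. cmod (\<alpha> j) < 1" "even s"
  shows "(\<Sum>x<2*n+1. (cmod (band_apply (cmv_factor \<alpha> s) v x))^2) \<le> (\<Sum>x<2*n+1. (cmod (v x))^2)"
proof -
  have "(\<Sum>x<2*n+1. (cmod (band_apply (cmv_factor \<alpha> s) v x))^2) = (\<Sum>b<n. (cmod (v (2*b+1)))^2 + (cmod (v (2*b+2)))^2)"
  proof -
    have eq: "(cmod (band_apply (cmv_factor \<alpha> s) v (2*b+1)))^2 + (cmod (band_apply (cmv_factor \<alpha> s) v (2*b+2)))^2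
        = (cmod (v (2*b+1)))^2 + (cmod (v (2*b+2)))^2" for b
    proof -
      have o: "odd (2*b+1+s)" "\<not> odd (2*b+2+s)" using assms(2) by auto
      have f: "partner s (2*b+1) = 2*b+2" "partner s (2*b+2) = 2*b+1" using assms(2) unfolding partner_def by auto
      have w: "block_coeff \<alpha> s (2*b+1) = \<alpha> (2*b)" "block_coeff \<alpha> s (2*b+2) = \<alpha> (2*b)" using o unfolding block_coeff_def by auto
      have r: "(rho (\<alpha> (2*b)))^2 + (cmod (\<alpha> (2*b)))^2 = 1" using assms(1) by (simp add: less_imp_le rho_sq)
      have v1: "band_apply (cmv_factor \<alpha> s) v (2*b+1) = \<alpha> (2*b) * v (2*b+1) + of_real (rho (\<alpha> (2*b))) * v (2*b+2)"
        using band_apply_factor[of "2*b+1" s \<alpha> v] o f w assms(2) by simp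
      have v2: "band_apply (cmv_factor \<alpha> s) v (2*b+2) = of_real (rho (\<alpha> (2*b))) * v (2*b+1) - cnj (\<alpha> (2*b)) * v (2*b+2)"
        using band_apply_factor[of "2*b+2" s \<alpha> v] o f w assms(2) by simp
      show ?thesis unfolding v1 v2 by (rule unitary_block_norm[OF r])
    qed
    show ?thesis unfolding sum_lessThan_pairs_odd using eq[simplified] by (simp add: band_apply_factor_row0)
  qed
  also have "\<dots> \<le> (\<Sum>x<2*n+1. (cmod (v x))^2)" unfolding sum_lessThan_pairs_odd by simp
  finally show ?thesis .
qed

lemma cmvM_column_contraction:
  assumes "\<forall>j. cmod (\<alpha> j) < 1" "odd s"
  shows "(\<Sum>x<2*n+2. (cmod (band_apply (cmv_factor \<alpha> s) v x))^2) \<le> (\<Sum>x<2*n+2. (cmod (v x))^2)"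
proof -
  have eq: "(cmod (band_apply (cmv_factor \<alpha> s) v (2*b+2)))^2 + (cmod (band_apply (cmv_factor \<alpha> s) v (Suc (2*b+2))))^2
        = (cmod (v (2*b+2)))^2 + (cmod (v (Suc (2*b+2))))^2" for b
  proof -
    have o: "odd (2*b+2+s)" "\<not> odd (Suc (2*b+2)+s)" using assms(2) by auto
    have f: "partner s (2*b+2) = Suc (2*b+2)" "partner s (Suc (2*b+2)) = 2*b+2" using assms(2) unfolding partner_def by auto
    have w: "block_coeff \<alpha> s (2*b+2) = \<alpha> (2*b+1)" "block_coeff \<alpha> s (Suc (2*b+2)) = \<alpha> (2*b+1)" using o unfolding block_coeff_def by auto
    have r: "(rho (\<alpha> (2*b+1)))^2 + (cmod (\<alpha> (2*b+1)))^2 = 1" using assms(1) by (simp add: less_imp_le rho_sq)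
    have v1: "band_apply (cmv_factor \<alpha> s) v (2*b+2) = \<alpha> (2*b+1) * v (2*b+2) + of_real (rho (\<alpha> (2*b+1))) * v (Suc (2*b+2))"
      using band_apply_factor[of "2*b+2" s \<alpha> v] o f w by simp
    have v2: "band_apply (cmv_factor \<alpha> s) v (Suc (2*b+2)) = of_real (rho (\<alpha> (2*b+1))) * v (2*b+2) - cnj (\<alpha> (2*b+1)) * v (Suc (2*b+2))"
      using band_apply_factor[of "Suc (2*b+2)" s \<alpha> v] o f w by simp
    show ?thesis unfolding v1 v2 by (rule unitary_block_norm[OF r])
  qed
  show ?thesis unfolding sum_lessThan_pairs_even using eq[simplified] band_apply_factor_row1[OF assms(2)] by (simp add: band_apply_factor_row0)
qed

lemma sum_lessThan_mono: "A \<le> B \<Longrightarrow> (\<forall>x. 0 \<le> f x) \<Longrightarrow> (\<Sum>x<A. f x) \<le> (\<Sum>x<(B::nat). (f x::real))"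
  by (rule sum_mono2) auto

lemma cmv_factor_column_contraction:
  assumes "\<forall>j. cmod (\<alpha> j) < 1"
  shows "(\<Sum>x<Y. (cmod (band_apply (cmv_factor \<alpha> s) v x))^2) \<le> (\<Sum>x<Y+1. (cmod (v x))^2)"
proof (cases "even s")
  case True
  define n where "n = Y div 2"
  have "(\<Sum>x<Y. (cmod (band_apply (cmv_factor \<alpha> s) v x))^2) \<le> (\<Sum>x<2*n+1. (cmod (band_apply (cmv_factor \<alpha> s) v x))^2)"
    by (rule sum_lessThan_mono) (auto simp: n_def)
  also have "\<dots> \<le> (\<Sum>x<2*n+1. (cmod (v x))^2)" by (rule cmvL_column_contraction[OF assms True])
  also have "\<dots> \<le> (\<Sum>x<Y+1. (cmod (v x))^2)" by (rule sum_lessThan_mono) (auto simp: n_def)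
  finally show ?thesis .
next
  case False
  show ?thesis
  proof (cases "Y = 0")
    case True then show ?thesis by simp
  next
    case Y: False
    define n where "n = (Y - 1) div 2"
    have "(\<Sum>x<Y. (cmod (band_apply (cmv_factor \<alpha> s) v x))^2) \<le> (\<Sum>x<2*n+2. (cmod (band_apply (cmv_factor \<alpha> s) v x))^2)"
      by (rule sum_lessThan_mono) (auto simp: n_def)
    also have "\<dots> \<le> (\<Sum>x<2*n+2. (cmod (v x))^2)" using cmvM_column_contraction[OF assms] False by blast
    also have "\<dots> \<le> (\<Sum>x<Y+1. (cmod (v x))^2)" by (rule sum_lessThan_mono) (use Y in \<open>auto simp: n_def\<close>)
    finally show ?thesis .
  qed
qed

lemma cmv_partial_column_norm: "\<forall>j. cmod (\<alpha> j) < 1 \<Longrightarrow> (\<Sum>x<Y. (cmod (cmv_partial \<alpha> s x y))^2) \<le> 1"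
proof (induction s arbitrary: Y)
  case 0
  have e: "(\<lambda>x. (cmod (mat_id x y))^2) = (\<lambda>x. if x = y then (cmod (mat_id y y))^2 else 0)"
    by (auto simp: mat_id_def)
  show ?case unfolding cmv_partial.simps(1) e sum.delta[OF finite_lessThan] by (auto simp: mat_id_def)
next
  case (Suc s)
  have "(\<Sum>x<Y. (cmod (cmv_partial \<alpha> (Suc s) x y))^2) = (\<Sum>x<Y. (cmod (band_apply (cmv_factor \<alpha> (Suc s)) (\<lambda>l. cmv_partial \<alpha> s l y) x))^2)"
    by (simp add: band_mult_eq_band_apply)
  also have "\<dots> \<le> (\<Sum>x<Y+1. (cmod (cmv_partial \<alpha> s x y))^2)" by (rule cmv_factor_column_contraction[OF Suc.prems])
  also have "\<dots> \<le> 1" using Suc by blast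
  finally show ?case .
qed

lemma norm_cmv_partial_le_1: assumes "\<forall>j. cmod (\<alpha> j) < 1" shows "cmod (cmv_partial \<alpha> s x y) \<le> 1"
proof -
  have "(cmod (cmv_partial \<alpha> s x y))^2 \<le> (\<Sum>x'<x+1. (cmod (cmv_partial \<alpha> s x' y))^2)"
    by (rule member_le_sum) auto
  also have "\<dots> \<le> 1" by (rule cmv_partial_column_norm[OF assms])
  finally show ?thesis by (simp add: power_le_one_iff)
qed

section \<open>Expansion around the free evolution\<close>

text \<open>The product G_s \<cdots> G_1 with G_s = free_factor s + perturbation \<alpha> s, expanded in powers of the
  perturbation; the remainder collects all terms with at least three perturbation factors.\<close>

definition perturbation :: "(nat\<Rightarrow>complex) \<Rightarrow> nat \<Rightarrow> nat\<Rightarrow>nat\<Rightarrow>complex" where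
  "perturbation \<alpha> s x l = cmv_factor \<alpha> s x l - cmv_factor (\<lambda>_. 0) s x l"

abbreviation free_factor :: "nat \<Rightarrow> nat\<Rightarrow>nat\<Rightarrow>complex" where "free_factor s \<equiv> cmv_factor (\<lambda>_. 0) s"

fun free_part :: "nat \<Rightarrow> nat\<Rightarrow>nat\<Rightarrow>complex" where
  "free_part 0 = mat_id"
| "free_part (Suc s) = band_mult (free_factor (Suc s)) (free_part s)"

fun first_order :: "(nat\<Rightarrow>complex) \<Rightarrow> nat \<Rightarrow> nat\<Rightarrow>nat\<Rightarrow>complex" where
  "first_order \<alpha> 0 = (\<lambda>_ _. 0)"
| "first_order \<alpha> (Suc s) = (\<lambda>x y. band_mult (free_factor (Suc s)) (first_order \<alpha> s) x y + band_mult (perturbation \<alpha> (Suc s)) (free_part s) x y)"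

fun second_order :: "(nat\<Rightarrow>complex) \<Rightarrow> nat \<Rightarrow> nat\<Rightarrow>nat\<Rightarrow>complex" where
  "second_order \<alpha> 0 = (\<lambda>_ _. 0)"
| "second_order \<alpha> (Suc s) = (\<lambda>x y. band_mult (free_factor (Suc s)) (second_order \<alpha> s) x y + band_mult (perturbation \<alpha> (Suc s)) (first_order \<alpha> s) x y)"

fun remainder :: "(nat\<Rightarrow>complex) \<Rightarrow> nat \<Rightarrow> nat\<Rightarrow>nat\<Rightarrow>complex" where
  "remainder \<alpha> 0 = (\<lambda>_ _. 0)"
| "remainder \<alpha> (Suc s) = (\<lambda>x y. band_mult (cmv_factor \<alpha> (Suc s)) (remainder \<alpha> s) x y + band_mult (perturbation \<alpha> (Suc s)) (second_order \<alpha> s) x y)"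

lemma band_mult_add_left: "band_mult (\<lambda>x l. F x l + H x l) P x y = band_mult F P x y + band_mult H P x y"
  unfolding band_mult_def by (simp add: distrib_right sum.distrib)

lemma band_mult_add_right: "band_mult F (\<lambda>l y. P l y + H l y) x y = band_mult F P x y + band_mult F H x y"
  unfolding band_mult_def by (simp add: distrib_left sum.distrib)

lemma band_mult_cong: "(\<And>l. P l y = H l y) \<Longrightarrow> band_mult F P x y = band_mult F H x y"
  unfolding band_mult_def by simp

lemma cmv_partial_split: "cmv_partial \<alpha> s x y = free_part s x y + first_order \<alpha> s x y + second_order \<alpha> s x y + remainder \<alpha> s x y"
proof (induction s arbitrary: x y)
  case 0 then show ?case by simp
next
  case (Suc s)
  have G: "cmv_factor \<alpha> (Suc s) = (\<lambda>x l. free_factor (Suc s) x l + perturbation \<alpha> (Suc s) x l)"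
    by (auto simp: perturbation_def)
  have "cmv_partial \<alpha> (Suc s) x y = band_mult (cmv_factor \<alpha> (Suc s)) (cmv_partial \<alpha> s) x y" by simp
  also have "\<dots> = band_mult (cmv_factor \<alpha> (Suc s)) (\<lambda>l y. (free_part s l y + first_order \<alpha> s l y + second_order \<alpha> s l y) + remainder \<alpha> s l y) x y"
    by (rule band_mult_cong) (rule Suc)
  also have "\<dots> = band_mult (cmv_factor \<alpha> (Suc s)) (\<lambda>l y. (free_part s l y + first_order \<alpha> s l y + second_order \<alpha> s l y)) x y
      + band_mult (cmv_factor \<alpha> (Suc s)) (remainder \<alpha> s) x y"
    by (rule band_mult_add_right)
  also have "band_mult (cmv_factor \<alpha> (Suc s)) (\<lambda>l y. (free_part s l y + first_order \<alpha> s l y + second_order \<alpha> s l y)) x y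
     = band_mult (free_factor (Suc s)) (free_part s) x y + band_mult (free_factor (Suc s)) (first_order \<alpha> s) x y
      + band_mult (free_factor (Suc s)) (second_order \<alpha> s) x y
      + band_mult (perturbation \<alpha> (Suc s)) (free_part s) x y + band_mult (perturbation \<alpha> (Suc s)) (first_order \<alpha> s) x y
      + band_mult (perturbation \<alpha> (Suc s)) (second_order \<alpha> s) x y"
    unfolding G band_mult_add_left band_mult_add_right by (simp only: add_ac)
  finally show ?case by (simp only: cmv_partial.simps free_part.simps first_order.simps second_order.simps remainder.simps add_ac)
qed

text \<open>free_path s u x is the column of the single 1 in row x of the permutation matrix
  A_s \<cdots> A_{u+1}.\<close>
fun free_path :: "nat \<Rightarrow> nat \<Rightarrow> nat \<Rightarrow> nat" where
  "free_path 0 u x = x"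
| "free_path (Suc s) u x = (if Suc s \<le> u then x else free_path s u (partner (Suc s) x))"

lemma free_path_zero: "free_path s u 0 = 0"
  by (induction s) (auto simp: partner_def)

lemma free_path_same: "free_path u u x = x"
  by (cases u) auto

lemma partner_pos: "1 \<le> x \<Longrightarrow> 1 \<le> partner s x"
  unfolding partner_def by auto

lemma partner_in: "1 \<le> x \<Longrightarrow> partner s x \<in> {x-1..x+1}"
  unfolding partner_def by auto

lemma band_mult_free_factor: "band_mult (free_factor s) P x y = (if x = 0 then 0 else P (partner s x) y)"
proof (cases "x = 0")
  case True then show ?thesis unfolding band_mult_def by (simp add: cmv_factor_row0)
next
  case False
  have "band_mult (free_factor s) P x y = (\<Sum>l\<in>{x-1..x+1}. if l = partner s x then P l y else 0)"
    unfolding band_mult_def by (rule sum.cong) (use False in \<open>auto simp: free_factor_entry\<close>)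
  also have "\<dots> = P (partner s x) y" using partner_in[of x s] False by simp
  finally show ?thesis using False by simp
qed

lemma perturbation_zero: "perturbation \<alpha> s 0 l = 0"
  unfolding perturbation_def by (simp add: cmv_factor_row0)

lemma band_mult_perturbation_row0: "band_mult (perturbation \<alpha> s) P 0 y = 0"
  unfolding band_mult_def by (simp add: perturbation_zero)

lemma perturbation_unroll:
  assumes Z0: "\<And>x y. Z 0 x y = 0"
    and ZS: "\<And>s x y. Z (Suc s) x y = (if x = 0 then 0 else Z s (partner (Suc s) x) y) + W s x y"
    and W0: "\<And>s y. W s 0 y = 0"
  shows "Z s x y = (\<Sum>t<s. W t (free_path s (Suc t) x) y)"
proof (induction s arbitrary: x)
  case 0 then show ?case by (simp add: Z0)
next
  case (Suc s)
  show ?case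
  proof (cases "x = 0")
    case True then show ?thesis by (simp add: ZS W0 free_path_zero)
  next
    case False
    have "Z (Suc s) x y = (\<Sum>t<s. W t (free_path s (Suc t) (partner (Suc s) x)) y) + W s x y"
      using False by (simp add: ZS Suc)
    also have "\<dots> = (\<Sum>t<Suc s. W t (free_path (Suc s) (Suc t) x) y)"
      by (simp add: free_path_same)
    finally show ?thesis .
  qed
qed

lemma free_part_eq: "free_part s x y = (if 1 \<le> x \<and> y = free_path s 0 x then 1 else 0)"
proof (induction s arbitrary: x)
  case 0 then show ?case by (auto simp: mat_id_def)
next
  case (Suc s)
  show ?case using Suc partner_pos[of x "Suc s"] by (auto simp: band_mult_free_factor)
qed

lemma first_order_eq: "first_order \<alpha> s x y = (\<Sum>t<s. band_mult (perturbation \<alpha> (Suc t)) (free_part t) (free_path s (Suc t) x) y)"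
  by (rule perturbation_unroll[where Z="first_order \<alpha>"]) (simp_all add: band_mult_free_factor band_mult_perturbation_row0)

lemma second_order_eq: "second_order \<alpha> s x y = (\<Sum>t<s. band_mult (perturbation \<alpha> (Suc t)) (first_order \<alpha> t) (free_path s (Suc t) x) y)"
  by (rule perturbation_unroll[where Z="second_order \<alpha>"]) (simp_all add: band_mult_free_factor band_mult_perturbation_row0)

lemma partner_bulk: "2 \<le> x \<Longrightarrow> partner s x = (if odd (x+s) then x+1 else x-1)"
  unfolding partner_def by auto

lemma free_path_bulk: "u \<le> s \<Longrightarrow> s - u + 2 \<le> x \<Longrightarrow> free_path s u x = (if odd (x+s) then x + (s-u) else x - (s-u))"
proof (induction s arbitrary: x)
  case 0 then show ?case by simp
next
  case (Suc s)
  show ?case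
  proof (cases "Suc s \<le> u")
    case True then have "u = Suc s" using Suc by simp
    then show ?thesis by simp
  next
    case False
    then have pos1_stay: "u \<le> s" by simp
    have x2: "2 \<le> x" using Suc False by simp
    define x' where "x' = partner (Suc s) x"
    have x': "x' = (if odd (x+Suc s) then x+1 else x-1)" unfolding x'_def by (rule partner_bulk[OF x2])
    have b: "s - u + 2 \<le> x'" using Suc.prems False x' by auto
    have "free_path (Suc s) u x = free_path s u x'" using False by (simp add: x'_def)
    also have "\<dots> = (if odd (x'+s) then x' + (s-u) else x' - (s-u))" by (rule Suc.IH[OF pos1_stay b])
    also have "\<dots> = (if odd (x+Suc s) then x + (Suc s-u) else x - (Suc s-u))"
      using x' pos1_stay Suc.prems by auto
    finally show ?thesis .
  qed
qed

lemma partner_invol: "partner s (partner s x) = x"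
  unfolding partner_def by (simp split: if_splits; presburger)

lemma inj_partner: "inj (partner s)"
  by (metis partner_invol injI)

lemma inj_free_path: "inj (free_path s u)"
proof (induction s)
  case 0 then show ?case by (simp add: inj_on_def)
next
  case (Suc s)
  show ?case
  proof (cases "Suc s \<le> u")
    case True then show ?thesis by (simp add: inj_on_def)
  next
    case False
    have eq: "free_path (Suc s) u = free_path s u \<circ> partner (Suc s)" using False by (auto simp: fun_eq_iff)
    show ?thesis unfolding eq by (rule inj_compose[OF Suc inj_partner])
  qed
qed

definition factor_diag :: "(nat\<Rightarrow>complex) \<Rightarrow> nat \<Rightarrow> nat \<Rightarrow> complex" where
  "factor_diag \<alpha> s x = (if odd (x+s) then block_coeff \<alpha> s x else - cnj (block_coeff \<alpha> s x))"

lemma perturbation_entry: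
  assumes "1 \<le> x" "\<not> (x = 1 \<and> odd s)"
  shows "perturbation \<alpha> s x l = (if l = x then factor_diag \<alpha> s x else if l = partner s x then of_real (rho (block_coeff \<alpha> s x)) - 1 else 0)"
  using cmv_factor_entry[OF assms, of \<alpha> l] cmv_factor_entry[OF assms, of "\<lambda>_. 0" l]
  by (auto simp: perturbation_def factor_diag_def block_coeff_def rho_def)

lemma perturbation_support: "perturbation \<alpha> s x l \<noteq> 0 \<Longrightarrow> l = x \<or> l = partner s x"
proof -
  assume a: "perturbation \<alpha> s x l \<noteq> 0"
  consider "x = 0" | "x = 1 \<and> odd s" | "1 \<le> x \<and> \<not> (x = 1 \<and> odd s)" by linarith
  then show ?thesis
  proof cases
    case 1 then show ?thesis using a perturbation_zero by auto
  next
    case 2 then show ?thesis using a cmv_factor_row1[of s] by (auto simp: perturbation_def)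
  next
    case 3 then show ?thesis using a perturbation_entry[of x s \<alpha> l] by (auto split: if_splits)
  qed
qed

definition local_size :: "(nat\<Rightarrow>complex) \<Rightarrow> nat \<Rightarrow> real" where
  "local_size \<alpha> x = cmod (\<alpha> (x-1)) + cmod (\<alpha> (x-2))"

lemma local_size_nonneg: "0 \<le> local_size \<alpha> x"
  unfolding local_size_def by simp

lemma abs_rho_minus_1_le: "cmod a \<le> 1 \<Longrightarrow> \<bar>rho a - 1\<bar> \<le> cmod a"
proof -
  assume a: "cmod a \<le> 1"
  have r: "rho a \<le> 1" "0 \<le> rho a" unfolding rho_def using a by (auto simp: power_le_one)
  have "1 - cmod a \<le> rho a"
  proof -
    have "(1 - cmod a)^2 \<le> 1 - (cmod a)^2" using a by (simp add: power2_eq_square algebra_simps mult_left_le)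
    then have "sqrt ((1 - cmod a)^2) \<le> rho a" unfolding rho_def by (rule real_sqrt_le_mono)
    then show ?thesis using a by simp
  qed
  then show ?thesis using r by auto
qed

lemma norm_perturbation_le:
  assumes "\<forall>j. cmod (\<alpha> j) < 1"
  shows "cmod (perturbation \<alpha> s x l) \<le> local_size \<alpha> x"
proof -
  have b0: "0 \<le> local_size \<alpha> x" unfolding local_size_def by simp
  consider "x = 0" | "x = 1 \<and> odd s" | "1 \<le> x \<and> \<not> (x = 1 \<and> odd s)" by linarith
  then show ?thesis
  proof cases
    case 1 then show ?thesis using perturbation_zero b0 by auto
  next
    case 2 then show ?thesis using cmv_factor_row1[of s] b0 by (auto simp: perturbation_def)
  next
    case 3
    have bwb: "cmod (block_coeff \<alpha> s x) \<le> local_size \<alpha> x" unfolding block_coeff_def local_size_def by auto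
    have bw1: "cmod (block_coeff \<alpha> s x) \<le> 1" using assms unfolding block_coeff_def by (auto intro: less_imp_le)
    have "cmod (of_real (rho (block_coeff \<alpha> s x)) - 1) = \<bar>rho (block_coeff \<alpha> s x) - 1\<bar>"
      by (metis norm_of_real of_real_1 of_real_diff)
    also have "\<dots> \<le> cmod (block_coeff \<alpha> s x)" by (rule abs_rho_minus_1_le[OF bw1])
    finally have e: "cmod (of_real (rho (block_coeff \<alpha> s x)) - 1) \<le> local_size \<alpha> x" using bwb by linarith
    have factor_diag: "cmod (factor_diag \<alpha> s x) \<le> local_size \<alpha> x" using bwb unfolding factor_diag_def by auto
    show ?thesis using 3 perturbation_entry[of x s \<alpha> l] e factor_diag b0 by auto
  qed
qed

section \<open>The remainder\<close>

definition remainder_source :: "(nat\<Rightarrow>complex) \<Rightarrow> nat \<Rightarrow> nat \<Rightarrow> nat \<Rightarrow> complex" where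
  "remainder_source \<alpha> t = band_mult (perturbation \<alpha> (Suc t)) (second_order \<alpha> t)"

text \<open>Duhamel: R_{s+1} = G_{s+1} R_s + D_{s+1} Q_2(s), and G_{s+1} is an l^2-contraction on columns.\<close>
lemma remainder_column_L2_le:
  assumes "\<forall>j. cmod (\<alpha> j) < 1"
  shows "L2_set (\<lambda>x. cmod (remainder \<alpha> s x y)) {..<Y} \<le> (\<Sum>t<s. \<Sum>x<Y+s. cmod (remainder_source \<alpha> t x y))"
proof (induction s arbitrary: Y)
  case 0 then show ?case by (simp add: L2_set_def)
next
  case (Suc s)
  let ?a = "\<lambda>x. band_mult (cmv_factor \<alpha> (Suc s)) (remainder \<alpha> s) x y"
  let ?b = "\<lambda>x. remainder_source \<alpha> s x y"
  have "L2_set (\<lambda>x. cmod (remainder \<alpha> (Suc s) x y)) {..<Y} \<le> L2_set (\<lambda>x. cmod (?a x) + cmod (?b x)) {..<Y}"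
    by (rule L2_set_mono) (auto simp: remainder_source_def norm_triangle_ineq)
  also have "\<dots> \<le> L2_set (\<lambda>x. cmod (?a x)) {..<Y} + L2_set (\<lambda>x. cmod (?b x)) {..<Y}"
    by (rule L2_set_triangle_ineq)
  also have "L2_set (\<lambda>x. cmod (?a x)) {..<Y} \<le> L2_set (\<lambda>x. cmod (remainder \<alpha> s x y)) {..<Y+1}"
    unfolding L2_set_def band_mult_eq_band_apply by (rule real_sqrt_le_mono) (rule cmv_factor_column_contraction[OF assms])
  also have "\<dots> \<le> (\<Sum>t<s. \<Sum>x<Y+1+s. cmod (remainder_source \<alpha> t x y))" by (rule Suc.IH)
  also have "L2_set (\<lambda>x. cmod (?b x)) {..<Y} \<le> (\<Sum>x<Y. cmod (?b x))"
    by (rule L2_set_le_sum) simp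
  also have "\<dots> \<le> (\<Sum>x<Y + Suc s. cmod (?b x))"
    by (rule sum_lessThan_mono) auto
  finally show ?case by simp
qed

lemma norm_remainder_le:
  assumes "\<forall>j. cmod (\<alpha> j) < 1"
  shows "cmod (remainder \<alpha> s x y) \<le> (\<Sum>t<s. \<Sum>x'<x+1+s. cmod (remainder_source \<alpha> t x' y))"
proof -
  have "cmod (remainder \<alpha> s x y) = sqrt ((cmod (remainder \<alpha> s x y))^2)" by simp
  also have "\<dots> \<le> L2_set (\<lambda>x. cmod (remainder \<alpha> s x y)) {..<x+1}"
    unfolding L2_set_def by (rule real_sqrt_le_mono) (rule member_le_sum, auto)
  also have "\<dots> \<le> (\<Sum>t<s. \<Sum>x'<x+1+s. cmod (remainder_source \<alpha> t x' y))" by (rule remainder_column_L2_le[OF assms])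
  finally show ?thesis .
qed

declare sum.cl_ivl_Suc[simp del]

lemma sum_band_const_le: "(\<Sum>l\<in>{(x::nat)-1..x+1}. (c::real)) \<le> 3 * c" if "0 \<le> c"
proof -
  have "card {x-1..x+1} \<le> 3" by simp
  then show ?thesis using that by (simp add: mult_right_mono)
qed

lemma sum_sum_band_le:
  fixes h :: "nat \<Rightarrow> real"
  assumes X: "finite X" and h: "\<And>l. 0 \<le> h l" and S: "\<And>L. finite L \<Longrightarrow> sum h L \<le> S"
  shows "(\<Sum>x\<in>X. \<Sum>l\<in>{x-1..x+1}. h l) \<le> 3 * S"
proof -
  define U where "U = (\<Union>x\<in>X. {x-1..x+1})"
  have U: "finite U" using X by (simp add: U_def)
  have "(\<Sum>x\<in>X. \<Sum>l\<in>{x-1..x+1}. h l) = (\<Sum>x\<in>X. \<Sum>l\<in>{l\<in>U. x-1 \<le> l \<and> l \<le> x+1}. h l)"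
    by (intro sum.cong refl arg_cong2[where f=sum]) (auto simp: U_def)
  also have "\<dots> = (\<Sum>l\<in>U. \<Sum>x\<in>{x\<in>X. x-1 \<le> l \<and> l \<le> x+1}. h l)"
    by (rule sum.swap_restrict[OF X U])
  also have "\<dots> \<le> (\<Sum>l\<in>U. 3 * h l)"
  proof (rule sum_mono)
    fix l
    have "card {x\<in>X. x-1 \<le> l \<and> l \<le> x+1} \<le> card {l-1..l+1}"
      by (rule card_mono) auto
    also have "\<dots> \<le> 3" by simp
    finally show "(\<Sum>x\<in>{x\<in>X. x-1 \<le> l \<and> l \<le> x+1}. h l) \<le> 3 * h l"
      using h[of l] by (simp add: mult_right_mono)
  qed
  also have "\<dots> \<le> 3 * S" using S[OF U] by (simp add: sum_distrib_left[symmetric])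
  finally show ?thesis .
qed

lemma sum_comp_inj_le:
  assumes "inj \<phi>" "finite L" "\<And>Z. finite Z \<Longrightarrow> sum g Z \<le> S"
  shows "(\<Sum>l\<in>L. g (\<phi> l)) \<le> S"
proof -
  have "(\<Sum>l\<in>L. g (\<phi> l)) = sum g (\<phi> ` L)"
    using assms(1) by (simp add: sum.reindex inj_on_subset)
  also have "\<dots> \<le> S" using assms(2,3) by simp
  finally show ?thesis .
qed

lemma power3_add_le: "0 \<le> a \<Longrightarrow> 0 \<le> b \<Longrightarrow> (a+b)^3 \<le> 4*(a^3+(b::real)^3)"
proof -
  assume a: "0 \<le> a" and b: "0 \<le> b"
  have "0 \<le> 3*(a+b)*(a-b)^2" using a b by simp
  then show ?thesis by (simp add: power2_eq_square power3_eq_cube algebra_simps)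
qed

lemma mult3_le_sum_power3: "0 \<le> a \<Longrightarrow> 0 \<le> b \<Longrightarrow> 0 \<le> c \<Longrightarrow> a*b*c \<le> a^3 + b^3 + (c::real)^3"
proof -
  assume a: "0 \<le> a" and b: "0 \<le> b" and c: "0 \<le> c"
  define m where "m = max a (max b c)"
  have "a*b*c \<le> m*m*m" using a b c unfolding m_def by (intro mult_mono) auto
  also have "\<dots> = m^3" by (simp add: power3_eq_cube)
  also have "\<dots> \<le> a^3 + b^3 + c^3" using a b c unfolding m_def by (auto simp: max_def)
  finally show ?thesis .
qed

text \<open>AM-GM bounds each product by three cubes, and each cube sum runs along an injective path.\<close>
lemma sum_band_triple_le:
  fixes b :: "nat \<Rightarrow> real"
  assumes X: "finite X" and b: "\<And>z. 0 \<le> b z" and S: "\<And>Z. finite Z \<Longrightarrow> (\<Sum>z\<in>Z. b z ^ 3) \<le> S"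
    and \<phi>: "inj \<phi>" and \<psi>: "inj \<psi>"
  shows "(\<Sum>x\<in>X. \<Sum>l\<in>{x-1..x+1}. \<Sum>m\<in>{\<phi> l - 1..\<phi> l + 1}. b x * b (\<phi> l) * b (\<psi> m)) \<le> 27 * S"
proof -
  let ?g = "\<lambda>z. b z ^ 3"
  have g: "0 \<le> ?g z" for z using b by simp
  have A: "(\<Sum>x\<in>X. \<Sum>l\<in>{x-1..x+1}. \<Sum>m\<in>{\<phi> l - 1..\<phi> l + 1}. ?g x) \<le> 9 * S"
  proof -
    have "(\<Sum>l\<in>{x-1..x+1}. \<Sum>m\<in>{\<phi> l - 1..\<phi> l + 1}. ?g x) \<le> 9 * ?g x" for x
    proof -
      have "(\<Sum>l\<in>{x-1..x+1}. \<Sum>m\<in>{\<phi> l - 1..\<phi> l + 1}. ?g x) \<le> (\<Sum>l\<in>{x-1..x+1}. 3 * ?g x)"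
        by (intro sum_mono sum_band_const_le) (simp add: b)
      also have "\<dots> \<le> 3 * (3 * ?g x)" by (intro sum_band_const_le) (simp add: b)
      finally show ?thesis by simp
    qed
    then have "(\<Sum>x\<in>X. \<Sum>l\<in>{x-1..x+1}. \<Sum>m\<in>{\<phi> l - 1..\<phi> l + 1}. ?g x) \<le> 9 * (\<Sum>x\<in>X. ?g x)"
      by (simp add: sum_distrib_left sum_mono)
    also have "\<dots> \<le> 9 * S" using S[OF X] by simp
    finally show ?thesis .
  qed
  have B: "(\<Sum>x\<in>X. \<Sum>l\<in>{x-1..x+1}. \<Sum>m\<in>{\<phi> l - 1..\<phi> l + 1}. ?g (\<phi> l)) \<le> 9 * S"
  proof -
    have "(\<Sum>x\<in>X. \<Sum>l\<in>{x-1..x+1}. \<Sum>m\<in>{\<phi> l - 1..\<phi> l + 1}. ?g (\<phi> l))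
        \<le> (\<Sum>x\<in>X. \<Sum>l\<in>{x-1..x+1}. 3 * ?g (\<phi> l))"
      by (intro sum_mono sum_band_const_le) (simp add: b)
    also have "\<dots> = 3 * (\<Sum>x\<in>X. \<Sum>l\<in>{x-1..x+1}. ?g (\<phi> l))" by (simp add: sum_distrib_left)
    also have "\<dots> \<le> 3 * (3 * S)"
      using sum_sum_band_le[OF X g sum_comp_inj_le[OF \<phi> _ S]] by simp
    finally show ?thesis by simp
  qed
  have C: "(\<Sum>x\<in>X. \<Sum>l\<in>{x-1..x+1}. \<Sum>m\<in>{\<phi> l - 1..\<phi> l + 1}. ?g (\<psi> m)) \<le> 9 * S"
  proof -
    define H where "H n = (\<Sum>m\<in>{n - 1..n + 1}. ?g (\<psi> m))" for n
    have H: "0 \<le> H n" for n unfolding H_def by (simp add: b sum_nonneg)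
    have HS: "sum H N \<le> 3 * S" if "finite N" for N
      unfolding H_def by (rule sum_sum_band_le[OF that g sum_comp_inj_le[OF \<psi> _ S]])
    show ?thesis
      using sum_sum_band_le[OF X H sum_comp_inj_le[OF \<phi> _ HS]] unfolding H_def by simp
  qed
  have "(\<Sum>x\<in>X. \<Sum>l\<in>{x-1..x+1}. \<Sum>m\<in>{\<phi> l - 1..\<phi> l + 1}. b x * b (\<phi> l) * b (\<psi> m))
      \<le> (\<Sum>x\<in>X. \<Sum>l\<in>{x-1..x+1}. \<Sum>m\<in>{\<phi> l - 1..\<phi> l + 1}. ?g x + ?g (\<phi> l) + ?g (\<psi> m))"
    by (intro sum_mono mult3_le_sum_power3) (simp_all add: b)
  also have "\<dots> \<le> 27 * S" unfolding sum.distrib using A B C by linarith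
  finally show ?thesis .
qed

lemma row_mass_band_mult_perturbation:
  assumes "\<forall>j. cmod (\<alpha> j) < 1" "\<And>l. (\<Sum>i<Ti. cmod (P l i)) \<le> V l"
  shows "(\<Sum>i<Ti. cmod (band_mult (perturbation \<alpha> s) P x i)) \<le> (\<Sum>l\<in>{x-1..x+1}. local_size \<alpha> x * V l)"
proof -
  have "(\<Sum>i<Ti. cmod (band_mult (perturbation \<alpha> s) P x i))
      \<le> (\<Sum>i<Ti. \<Sum>l\<in>{x-1..x+1}. local_size \<alpha> x * cmod (P l i))"
  proof (rule sum_mono)
    fix i
    have "cmod (band_mult (perturbation \<alpha> s) P x i) \<le> (\<Sum>l\<in>{x-1..x+1}. cmod (perturbation \<alpha> s x l * P l i))"
      unfolding band_mult_def by (rule norm_sum)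
    also have "\<dots> \<le> (\<Sum>l\<in>{x-1..x+1}. local_size \<alpha> x * cmod (P l i))"
      by (rule sum_mono) (simp add: norm_mult norm_perturbation_le[OF assms(1)] mult_right_mono)
    finally show "cmod (band_mult (perturbation \<alpha> s) P x i) \<le> (\<Sum>l\<in>{x-1..x+1}. local_size \<alpha> x * cmod (P l i))" .
  qed
  also have "\<dots> = (\<Sum>l\<in>{x-1..x+1}. local_size \<alpha> x * (\<Sum>i<Ti. cmod (P l i)))"
    by (subst sum.swap) (simp add: sum_distrib_left)
  also have "\<dots> \<le> (\<Sum>l\<in>{x-1..x+1}. local_size \<alpha> x * V l)"
    by (rule sum_mono) (simp add: assms(2) local_size_nonneg mult_left_mono)
  finally show ?thesis .
qed

lemma row_mass_sum:
  assumes "\<And>t. t < n \<Longrightarrow> (\<Sum>i<Ti. cmod (f t i)) \<le> V t"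
  shows "(\<Sum>i<Ti. cmod (\<Sum>t<n. f t i)) \<le> (\<Sum>t<n. V t)"
proof -
  have "(\<Sum>i<Ti. cmod (\<Sum>t<n. f t i)) \<le> (\<Sum>i<Ti. \<Sum>t<n. cmod (f t i))"
    by (rule sum_mono) (rule norm_sum)
  also have "\<dots> = (\<Sum>t<n. \<Sum>i<Ti. cmod (f t i))" by (rule sum.swap)
  also have "\<dots> \<le> (\<Sum>t<n. V t)" by (rule sum_mono) (use assms in auto)
  finally show ?thesis .
qed

lemma free_part_row_mass: "(\<Sum>i<Ti. cmod (free_part t l i)) \<le> 1"
proof -
  have e: "(\<lambda>i. cmod (free_part t l i)) = (\<lambda>i. if i = free_path t 0 l then (if 1 \<le> l then 1 else 0) else 0)"
    by (auto simp: free_part_eq)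
  show ?thesis unfolding e sum.delta[OF finite_lessThan] by auto
qed

definition first_order_mass :: "(nat\<Rightarrow>complex) \<Rightarrow> nat \<Rightarrow> nat \<Rightarrow> real" where
  "first_order_mass \<alpha> t l = (\<Sum>t1<t. 3 * local_size \<alpha> (free_path t (Suc t1) l))"

definition second_order_mass :: "(nat\<Rightarrow>complex) \<Rightarrow> nat \<Rightarrow> nat \<Rightarrow> real" where
  "second_order_mass \<alpha> t l = (\<Sum>t2<t. \<Sum>l2\<in>{free_path t (Suc t2) l - 1..free_path t (Suc t2) l + 1}.
      local_size \<alpha> (free_path t (Suc t2) l) * first_order_mass \<alpha> t2 l2)"

lemma first_order_row_mass:
  assumes "\<forall>j. cmod (\<alpha> j) < 1"
  shows "(\<Sum>i<Ti. cmod (first_order \<alpha> t l i)) \<le> first_order_mass \<alpha> t l"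
  unfolding first_order_eq first_order_mass_def
proof (rule row_mass_sum)
  fix t1
  let ?x = "free_path t (Suc t1) l"
  have "(\<Sum>i<Ti. cmod (band_mult (perturbation \<alpha> (Suc t1)) (free_part t1) ?x i))
      \<le> (\<Sum>l\<in>{?x-1..?x+1}. local_size \<alpha> ?x * 1)"
    by (rule row_mass_band_mult_perturbation[OF assms free_part_row_mass])
  also have "\<dots> \<le> 3 * (local_size \<alpha> ?x * 1)" by (rule sum_band_const_le) (simp add: local_size_nonneg)
  finally show "(\<Sum>i<Ti. cmod (band_mult (perturbation \<alpha> (Suc t1)) (free_part t1) ?x i))
      \<le> 3 * local_size \<alpha> ?x" by simp
qed

lemma second_order_row_mass:
  assumes "\<forall>j. cmod (\<alpha> j) < 1"
  shows "(\<Sum>i<Ti. cmod (second_order \<alpha> t l i)) \<le> second_order_mass \<alpha> t l"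
  unfolding second_order_eq second_order_mass_def
  by (rule row_mass_sum, rule row_mass_band_mult_perturbation[OF assms], rule first_order_row_mass[OF assms])

lemma remainder_source_row_mass:
  assumes "\<forall>j. cmod (\<alpha> j) < 1"
  shows "(\<Sum>i<Ti. cmod (remainder_source \<alpha> t x i)) \<le> (\<Sum>l\<in>{x-1..x+1}. local_size \<alpha> x * second_order_mass \<alpha> t l)"
  unfolding remainder_source_def
  by (rule row_mass_band_mult_perturbation[OF assms], rule second_order_row_mass[OF assms])

lemma sum_second_order_mass_le:
  assumes X: "finite X" and S: "\<And>Z. finite Z \<Longrightarrow> (\<Sum>z\<in>Z. local_size \<alpha> z ^ 3) \<le> S"
  shows "(\<Sum>x\<in>X. \<Sum>l\<in>{x-1..x+1}. local_size \<alpha> x * second_order_mass \<alpha> t l) \<le> 81 * (real t)^2 * S"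
proof -
  let ?b = "local_size \<alpha>"
  let ?u = "\<lambda>t2. free_path t (Suc t2)" and ?v = "\<lambda>t2 t1. free_path t2 (Suc t1)"
  let ?T = "\<lambda>t2 t1. \<Sum>x\<in>X. \<Sum>l\<in>{x-1..x+1}. \<Sum>m\<in>{?u t2 l - 1..?u t2 l + 1}. ?b x * ?b (?u t2 l) * ?b (?v t2 t1 m)"
  have S0: "0 \<le> S" using S[of "{}"] by simp
  have "(\<Sum>x\<in>X. \<Sum>l\<in>{x-1..x+1}. ?b x * second_order_mass \<alpha> t l) = 3 * (\<Sum>t2<t. \<Sum>t1<t2. ?T t2 t1)"
    unfolding second_order_mass_def first_order_mass_def
    by (simp add: sum_distrib_left sum_distrib_right mult_ac sum.swap[where A="{..<_}"])
  also have "\<dots> \<le> 3 * (\<Sum>t2<t. \<Sum>t1<t2. 27 * S)"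
    by (intro mult_left_mono sum_mono sum_band_triple_le[OF X local_size_nonneg S inj_free_path inj_free_path]) auto
  also have "\<dots> \<le> 3 * (\<Sum>t2<t. real t * (27 * S))"
    by (intro mult_left_mono sum_mono) (auto simp: S0 mult_right_mono)
  also have "\<dots> = 81 * (real t)^2 * S" by (simp add: power2_eq_square)
  finally show ?thesis .
qed

lemma remainder_diag_sum_le:
  assumes \<alpha>: "\<forall>j. cmod (\<alpha> j) < 1" and S: "\<And>Z. finite Z \<Longrightarrow> (\<Sum>z\<in>Z. local_size \<alpha> z ^ 3) \<le> S"
  shows "(\<Sum>i<Ti. cmod (remainder \<alpha> s i i)) \<le> 81 * (real s)^3 * S"
proof -
  have S0: "0 \<le> S" using S[of "{}"] by simp
  have "(\<Sum>i<Ti. cmod (remainder \<alpha> s i i)) \<le> (\<Sum>i<Ti. \<Sum>t<s. \<Sum>x<Ti+s. cmod (remainder_source \<alpha> t x i))"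
  proof (rule sum_mono)
    fix i assume i: "i \<in> {..<Ti}"
    have "cmod (remainder \<alpha> s i i) \<le> (\<Sum>t<s. \<Sum>x<i+1+s. cmod (remainder_source \<alpha> t x i))"
      by (rule norm_remainder_le[OF \<alpha>])
    also have "\<dots> \<le> (\<Sum>t<s. \<Sum>x<Ti+s. cmod (remainder_source \<alpha> t x i))"
      by (intro sum_mono sum_lessThan_mono) (use i in auto)
    finally show "cmod (remainder \<alpha> s i i) \<le> (\<Sum>t<s. \<Sum>x<Ti+s. cmod (remainder_source \<alpha> t x i))" .
  qed
  also have "\<dots> = (\<Sum>t<s. \<Sum>x<Ti+s. \<Sum>i<Ti. cmod (remainder_source \<alpha> t x i))"
    by (subst sum.swap, rule sum.cong[OF refl], rule sum.swap)
  also have "\<dots> \<le> (\<Sum>t<s. \<Sum>x<Ti+s. \<Sum>l\<in>{x-1..x+1}. local_size \<alpha> x * second_order_mass \<alpha> t l)"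
    by (intro sum_mono remainder_source_row_mass[OF \<alpha>])
  also have "\<dots> \<le> (\<Sum>t<s. 81 * (real s)^2 * S)"
  proof (intro sum_mono)
    fix t assume "t \<in> {..<s}"
    then have "81 * (real t)^2 * S \<le> 81 * (real s)^2 * S"
      using S0 by (intro mult_right_mono mult_left_mono power_mono) auto
    then show "(\<Sum>x<Ti+s. \<Sum>l\<in>{x-1..x+1}. local_size \<alpha> x * second_order_mass \<alpha> t l) \<le> 81 * (real s)^2 * S"
      using sum_second_order_mass_le[OF finite_lessThan S] by (meson order_trans)
  qed
  also have "\<dots> = 81 * (real s)^3 * S" by (simp add: power2_eq_square power3_eq_cube)
  finally show ?thesis .
qed
section \<open>The diagonal in the bulk\<close>

lemma band_mult_perturbation:
  assumes "1 \<le> x" "\<not> (x = 1 \<and> odd s)"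
  shows "band_mult (perturbation \<alpha> s) P x y = perturbation \<alpha> s x x * P x y + perturbation \<alpha> s x (partner s x) * P (partner s x) y"
  unfolding band_mult_def by (rule sum_band_two[OF assms]) (use perturbation_support in force)

lemma free_path_parity: "u \<le> s \<Longrightarrow> s - u + 2 \<le> x \<Longrightarrow> even (free_path s u x + x + (s-u))"
  using free_path_bulk[of u s x] by auto

lemma free_part_bulk_diag: "1 \<le> k \<Longrightarrow> 2*k+3 \<le> i \<Longrightarrow> free_part (2*k) i i = 0"
  using free_path_bulk[of 0 "2*k" i] by (auto simp: free_part_eq)

lemma first_order_bulk_diag:
  assumes "1 \<le> k" "2*k+3 \<le> i"
  shows "first_order \<alpha> (2*k) i i = 0"
proof -
  have "band_mult (perturbation \<alpha> (Suc t)) (free_part t) (free_path (2*k) (Suc t) i) i = 0" if t: "t < 2*k" for t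
  proof -
    define u where "u = free_path (2*k) (Suc t) i"
    have u: "u = (if odd i then i + (2*k - Suc t) else i - (2*k - Suc t))"
      unfolding u_def using free_path_bulk[of "Suc t" "2*k" i] t assms by auto
    have u3: "3 \<le> u" using u t assms by auto
    have ut: "t + 2 \<le> u" using u t assms by auto
    have stay: "free_part t u i = 0"
    proof -
      have e: "even (free_path t 0 u + u + t)" using free_path_parity[of 0 t u] ut by simp
      have "free_path t 0 u \<noteq> i"
      proof
        assume "free_path t 0 u = i"
        then have "even (i + u + t)" using e by simp
        then show False using u t assms by (auto split: if_splits; presburger)
      qed
      then show ?thesis by (simp add: free_part_eq)
    qed
    have switch: "free_part t (partner (Suc t) u) i = 0"
    proof -
      have f: "partner (Suc t) u = (if odd i then u + 1 else u - 1)" using partner_bulk[of u "Suc t"] u3 u t by auto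
      have "free_path t 0 (partner (Suc t) u) = (if odd (partner (Suc t) u + t) then partner (Suc t) u + t else partner (Suc t) u - t)"
        using free_path_bulk[of 0 t "partner (Suc t) u"] f u t assms by auto
      then have "free_path t 0 (partner (Suc t) u) \<noteq> i" using f u t assms by auto
      then show ?thesis by (simp add: free_part_eq)
    qed
    show ?thesis unfolding u_def[symmetric]
      using band_mult_perturbation[of u "Suc t" \<alpha> "free_part t" i] u3 stay switch by simp
  qed
  then show ?thesis unfolding first_order_eq by simp
qed

lemma free_path_up: "u \<le> s \<Longrightarrow> s - u + 2 \<le> x \<Longrightarrow> odd (x+s) \<Longrightarrow> free_path s u x = x + (s-u)"
  using free_path_bulk by auto
lemma free_path_dn: "u \<le> s \<Longrightarrow> s - u + 2 \<le> x \<Longrightarrow> \<not> odd (x+s) \<Longrightarrow> free_path s u x = x - (s-u)"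
  using free_path_bulk by auto
lemma partner_up: "2 \<le> x \<Longrightarrow> odd (x+s) \<Longrightarrow> partner s x = x + 1"
  using partner_bulk by auto
lemma partner_dn: "2 \<le> x \<Longrightarrow> \<not> odd (x+s) \<Longrightarrow> partner s x = x - 1"
  using partner_bulk by auto

lemma free_part_row_eq: "1 \<le> x \<Longrightarrow> free_part t x i = (if i = free_path t 0 x then 1 else 0)"
  by (simp add: free_part_eq)

text \<open>For a row i \<ge> 2k+3 and times t1 < t2 < 2k, a second-order path runs freely from i back to pos2
  at time t2+1, where the perturbation either keeps the row or switches to its partner, and then
  freely to pos1_stay or pos1_switch at time t1+1. Only the staying path returns to i, and only
  if t2 = t1 + k.\<close>

context
  fixes k i t1 t2 :: nat
  assumes k: "1 \<le> k" and i: "2*k+3 \<le> i" and t: "t1 < t2" "t2 < 2*k"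
begin

definition "pos2 = free_path (2*k) (Suc t2) i"
definition "pos1_stay = free_path t2 (Suc t1) pos2"
definition "pos1_switch = free_path t2 (Suc t1) (partner (Suc t2) pos2)"

lemma bulk_positions_odd:
  assumes o: "odd i"
  shows "pos2 = i + 2*k - Suc t2" "pos1_stay = i + 2*k + t1 - 2*t2" "pos1_switch = i + 2*k - Suc t1"
    "free_part t1 pos1_stay i = (if t2 = t1 + k then 1 else 0)"
    "free_part t1 (partner (Suc t1) pos1_stay) i = 0"
    "free_part t1 pos1_switch i = 0"
    "free_part t1 (partner (Suc t1) pos1_switch) i = 0"
proof -
  show u: "pos2 = i + 2*k - Suc t2" unfolding pos2_def using free_path_up[of "Suc t2" "2*k" i] t o i by auto
  show s: "pos1_stay = i + 2*k + t1 - 2*t2" unfolding pos1_stay_def u using free_path_dn[of "Suc t1" t2 "i + 2*k - Suc t2"] t o i by auto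
  have p: "free_path t1 0 pos1_stay = i + 2*k + 2*t1 - 2*t2" unfolding s using free_path_up[of 0 t1 "i + 2*k + t1 - 2*t2"] t o i by auto
  show "free_part t1 pos1_stay i = (if t2 = t1 + k then 1 else 0)" using free_part_row_eq[of pos1_stay t1 i] s p t i by auto
  have f: "partner (Suc t1) pos1_stay = pos1_stay - 1" using partner_dn[of pos1_stay "Suc t1"] s t o i by auto
  have p2: "free_path t1 0 (pos1_stay - 1) = pos1_stay - 1 - t1" using free_path_dn[of 0 t1 "pos1_stay - 1"] s t o i by auto
  show "free_part t1 (partner (Suc t1) pos1_stay) i = 0" unfolding f using free_part_row_eq[of "pos1_stay - 1" t1 i] p2 s t i o by auto presburger
  have fu: "partner (Suc t2) pos2 = pos2 + 1" using partner_up[of pos2 "Suc t2"] u t o i by auto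
  show e: "pos1_switch = i + 2*k - Suc t1" unfolding pos1_switch_def fu unfolding u using free_path_up[of "Suc t1" t2 "i + 2*k - Suc t2 + 1"] t o i by auto
  have p3: "free_path t1 0 pos1_switch = pos1_switch - t1" using free_path_dn[of 0 t1 pos1_switch] e t o i by auto
  show "free_part t1 pos1_switch i = 0" using free_part_row_eq[of pos1_switch t1 i] p3 e t i o by auto presburger
  have f2: "partner (Suc t1) pos1_switch = pos1_switch + 1" using partner_up[of pos1_switch "Suc t1"] e t o i by auto
  have p4: "free_path t1 0 (pos1_switch + 1) = pos1_switch + 1 + t1" using free_path_up[of 0 t1 "pos1_switch+1"] e t o i by auto
  show "free_part t1 (partner (Suc t1) pos1_switch) i = 0" unfolding f2 using free_part_row_eq[of "pos1_switch+1" t1 i] p4 e t i o by auto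
qed

lemma bulk_positions_even:
  assumes o: "\<not> odd i"
  shows "pos2 = i + Suc t2 - 2*k" "pos1_stay = i + 2*t2 - t1 - 2*k" "pos1_switch = i + Suc t1 - 2*k"
    "free_part t1 pos1_stay i = (if t2 = t1 + k then 1 else 0)"
    "free_part t1 (partner (Suc t1) pos1_stay) i = 0"
    "free_part t1 pos1_switch i = 0"
    "free_part t1 (partner (Suc t1) pos1_switch) i = 0"
proof -
  show u: "pos2 = i + Suc t2 - 2*k" unfolding pos2_def using free_path_dn[of "Suc t2" "2*k" i] t o i by auto
  show s: "pos1_stay = i + 2*t2 - t1 - 2*k" unfolding pos1_stay_def u using free_path_up[of "Suc t1" t2 "i + Suc t2 - 2*k"] t o i by auto
  have p: "free_path t1 0 pos1_stay = pos1_stay - t1" using free_path_dn[of 0 t1 pos1_stay] s t o i by auto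
  show "free_part t1 pos1_stay i = (if t2 = t1 + k then 1 else 0)" using free_part_row_eq[of pos1_stay t1 i] s p t i by auto
  have f: "partner (Suc t1) pos1_stay = pos1_stay + 1" using partner_up[of pos1_stay "Suc t1"] s t o i by auto
  have p2: "free_path t1 0 (pos1_stay + 1) = pos1_stay + 1 + t1" using free_path_up[of 0 t1 "pos1_stay + 1"] s t o i by auto
  show "free_part t1 (partner (Suc t1) pos1_stay) i = 0" unfolding f using free_part_row_eq[of "pos1_stay + 1" t1 i] p2 s t i o by auto presburger
  have fu: "partner (Suc t2) pos2 = pos2 - 1" using partner_dn[of pos2 "Suc t2"] u t o i by auto
  show e: "pos1_switch = i + Suc t1 - 2*k" unfolding pos1_switch_def fu unfolding u using free_path_dn[of "Suc t1" t2 "i + Suc t2 - 2*k - 1"] t o i by auto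
  have p3: "free_path t1 0 pos1_switch = pos1_switch + t1" using free_path_up[of 0 t1 pos1_switch] e t o i by auto
  show "free_part t1 pos1_switch i = 0" using free_part_row_eq[of pos1_switch t1 i] p3 e t i o by auto presburger
  have f2: "partner (Suc t1) pos1_switch = pos1_switch - 1" using partner_dn[of pos1_switch "Suc t1"] e t o i by auto
  have p4: "free_path t1 0 (pos1_switch - 1) = pos1_switch - 1 - t1" using free_path_dn[of 0 t1 "pos1_switch-1"] e t o i by auto
  show "free_part t1 (partner (Suc t1) pos1_switch) i = 0" unfolding f2 using free_part_row_eq[of "pos1_switch-1" t1 i] p4 e t i o by auto
qed

end

definition shifted_corr :: "(nat\<Rightarrow>complex) \<Rightarrow> nat \<Rightarrow> int \<Rightarrow> complex" where
  "shifted_corr \<alpha> k j = (if 0 \<le> j then cnj (\<alpha> (nat j)) * \<alpha> (nat j + k) else 0)"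

definition bulk_diag :: "(nat\<Rightarrow>complex) \<Rightarrow> nat \<Rightarrow> nat \<Rightarrow> complex" where
  "bulk_diag \<alpha> k i = - (\<Sum>t<k. if odd i then shifted_corr \<alpha> k (int i - int t - 2) else shifted_corr \<alpha> k (int i + int t - int k - 1))"

lemma pos1_stay_ge_3: assumes "1 \<le> k" "2*k+3 \<le> i" "t1 < t2" "t2 < 2*k" shows "3 \<le> pos1_stay k i t1 t2"
  using bulk_positions_odd(2)[OF assms] bulk_positions_even(2)[OF assms] assms by (cases "odd i") auto

lemma pos1_switch_ge_3: assumes "1 \<le> k" "2*k+3 \<le> i" "t1 < t2" "t2 < 2*k" shows "3 \<le> pos1_switch k i t1 t2"
  using bulk_positions_odd(3)[OF assms] bulk_positions_even(3)[OF assms] assms by (cases "odd i") auto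

lemma free_path_bulk_ge_3: assumes "1 \<le> k" "2*k+3 \<le> i" "t2 < 2*k" shows "3 \<le> free_path (2*k) (Suc t2) i"
  using free_path_bulk[of "Suc t2" "2*k" i] assms by auto

lemma first_order_stay:
  assumes k: "1 \<le> k" and i: "2*k+3 \<le> i" and t2: "t2 < 2*k"
  shows "first_order \<alpha> t2 (free_path (2*k) (Suc t2) i) i
     = (\<Sum>t1<t2. if t2 = t1 + k then perturbation \<alpha> (Suc t1) (pos1_stay k i t1 t2) (pos1_stay k i t1 t2) else 0)"
  unfolding first_order_eq
proof (rule sum.cong[OF refl])
  fix t1 assume "t1 \<in> {..<t2}"
  then have t: "t1 < t2" by simp
  note a = k i t t2
  have e: "free_path t2 (Suc t1) (free_path (2*k) (Suc t2) i) = pos1_stay k i t1 t2" using pos1_stay_def[OF a] pos2_def[OF a] by simp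
  have s3: "3 \<le> pos1_stay k i t1 t2" by (rule pos1_stay_ge_3[OF a])
  have Q: "free_part t1 (pos1_stay k i t1 t2) i = (if t2 = t1 + k then 1 else 0)" "free_part t1 (partner (Suc t1) (pos1_stay k i t1 t2)) i = 0"
    using bulk_positions_odd(4,5)[OF a] bulk_positions_even(4,5)[OF a] by (cases "odd i", auto)+
  show "band_mult (perturbation \<alpha> (Suc t1)) (free_part t1) (free_path t2 (Suc t1) (free_path (2*k) (Suc t2) i)) i =
        (if t2 = t1 + k then perturbation \<alpha> (Suc t1) (pos1_stay k i t1 t2) (pos1_stay k i t1 t2) else 0)"
    unfolding e using band_mult_perturbation[of "pos1_stay k i t1 t2" "Suc t1" \<alpha> "free_part t1" i] s3 Q by simp
qed

lemma first_order_switch: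
  assumes k: "1 \<le> k" and i: "2*k+3 \<le> i" and t2: "t2 < 2*k"
  shows "first_order \<alpha> t2 (partner (Suc t2) (free_path (2*k) (Suc t2) i)) i = 0"
  unfolding first_order_eq
proof (rule sum.neutral, rule ballI)
  fix t1 assume "t1 \<in> {..<t2}"
  then have t: "t1 < t2" by simp
  note a = k i t t2
  have e: "free_path t2 (Suc t1) (partner (Suc t2) (free_path (2*k) (Suc t2) i)) = pos1_switch k i t1 t2" using pos1_switch_def[OF a] pos2_def[OF a] by simp
  have s3: "3 \<le> pos1_switch k i t1 t2" by (rule pos1_switch_ge_3[OF a])
  have Q: "free_part t1 (pos1_switch k i t1 t2) i = 0" "free_part t1 (partner (Suc t1) (pos1_switch k i t1 t2)) i = 0"
    using bulk_positions_odd(6,7)[OF a] bulk_positions_even(6,7)[OF a] by (cases "odd i", auto)+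
  show "band_mult (perturbation \<alpha> (Suc t1)) (free_part t1) (free_path t2 (Suc t1) (partner (Suc t2) (free_path (2*k) (Suc t2) i))) i = 0"
    unfolding e using band_mult_perturbation[of "pos1_switch k i t1 t2" "Suc t1" \<alpha> "free_part t1" i] s3 Q by simp
qed

lemma sum_delta_shift: "1 \<le> (k::nat) \<Longrightarrow> t2 < 2*k \<Longrightarrow> (\<Sum>t1<t2. if t2 = t1 + k then F t1 else (0::complex)) = (if k \<le> t2 then F (t2 - k) else 0)"
proof -
  assume k: "1 \<le> k" and t2: "t2 < 2*k"
  show ?thesis
  proof (cases "k \<le> t2")
    case True
    have "(\<Sum>t1<t2. if t2 = t1 + k then F t1 else 0) = (\<Sum>t1<t2. if t1 = t2 - k then F t1 else 0)"
    proof (rule sum.cong[OF refl])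
      fix t1 have "(t2 = t1 + k) = (t1 = t2 - k)" using True by arith
      then show "(if t2 = t1 + k then F t1 else 0) = (if t1 = t2 - k then F t1 else 0)" by simp
    qed
    also have "\<dots> = F (t2 - k)" using True k by (simp add: sum.delta')
    finally show ?thesis using True by simp
  next
    case False
    then show ?thesis by (intro trans[OF sum.neutral]) auto
  qed
qed

lemma sum_shift_half: "(\<Sum>t2<2*(k::nat). if k \<le> t2 then h (t2 - k) else (0::complex)) = (\<Sum>t1<k. h t1)"
proof -
  let ?f = "\<lambda>t2. if k \<le> t2 then h (t2 - k) else (0::complex)"
  have e: "{..<2*k} = {..<k} \<union> {k..<k+k}" by auto
  have "sum ?f {..<2*k} = sum ?f {..<k} + sum ?f {k..<k+k}"
    unfolding e by (rule sum.union_disjoint) auto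
  also have "sum ?f {..<k} = 0" by (rule sum.neutral) auto
  also have "sum ?f {k..<k+k} = (\<Sum>t2\<in>{0+k..<k+k}. h (t2 - k))" by (rule sum.cong) auto
  also have "\<dots> = (\<Sum>t1\<in>{0..<k}. h t1)" by (subst sum.shift_bounds_nat_ivl) simp
  finally show ?thesis by (simp add: atLeast0LessThan)
qed

lemma perturbation_diag_bulk: "2 \<le> x \<Longrightarrow> perturbation \<alpha> s x x = (if odd (x+s) then \<alpha> (x-1) else - cnj (\<alpha> (x-2)))"
  using perturbation_entry[of x s \<alpha> x] by (simp add: factor_diag_def block_coeff_def)

lemma perturbation_pair_bulk:
  assumes k: "1 \<le> k" and i: "2*k+3 \<le> i" and t1: "t1 < k"
  shows "perturbation \<alpha> (Suc (t1+k)) (free_path (2*k) (Suc (t1+k)) i) (free_path (2*k) (Suc (t1+k)) i)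
       * perturbation \<alpha> (Suc t1) (pos1_stay k i t1 (t1+k)) (pos1_stay k i t1 (t1+k))
     = - (if odd i then shifted_corr \<alpha> k (int i - int t1 - 2)
          else shifted_corr \<alpha> k (int i + int t1 - int k - 1))"
proof -
  have a: "t1 < t1 + k" "t1 + k < 2*k" using t1 k by auto
  show ?thesis
  proof (cases "odd i")
    case True
    have u: "free_path (2*k) (Suc (t1+k)) i = i + k - t1 - 1"
      using bulk_positions_odd(1)[OF k i a True] pos2_def[OF k i a] by simp
    have s: "pos1_stay k i t1 (t1+k) = i - t1" using bulk_positions_odd(2)[OF k i a True] by simp
    have g: "shifted_corr \<alpha> k (int i - int t1 - 2) = cnj (\<alpha> (i - t1 - 2)) * \<alpha> (i + k - t1 - 2)"
      unfolding shifted_corr_def using i t1 by (auto simp: nat_diff_distrib)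
    show ?thesis unfolding u s g using True i t1 by (simp add: perturbation_diag_bulk)
  next
    case False
    have u: "free_path (2*k) (Suc (t1+k)) i = i + t1 + 1 - k"
      using bulk_positions_even(1)[OF k i a False] pos2_def[OF k i a] by simp
    have s: "pos1_stay k i t1 (t1+k) = i + t1" using bulk_positions_even(2)[OF k i a False] by simp
    have n: "int i + int t1 - int k - 1 = int (i + t1 - k - 1)" using i t1 by auto
    have g: "shifted_corr \<alpha> k (int i + int t1 - int k - 1) = cnj (\<alpha> (i + t1 - k - 1)) * \<alpha> (i + t1 - 1)"
      unfolding shifted_corr_def n using i t1 by (simp del: of_nat_diff)
    show ?thesis unfolding u s g using False i t1 by (simp add: perturbation_diag_bulk)
  qed
qed

lemma second_order_bulk_diag:
  assumes k: "1 \<le> k" and i: "2*k+3 \<le> i"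
  shows "second_order \<alpha> (2*k) i i = bulk_diag \<alpha> k i"
proof -
  define h where "h t1 = perturbation \<alpha> (Suc (t1+k)) (free_path (2*k) (Suc (t1+k)) i) (free_path (2*k) (Suc (t1+k)) i)
       * perturbation \<alpha> (Suc t1) (pos1_stay k i t1 (t1+k)) (pos1_stay k i t1 (t1+k))" for t1
  have step: "band_mult (perturbation \<alpha> (Suc t2)) (first_order \<alpha> t2) (free_path (2*k) (Suc t2) i) i
      = (if k \<le> t2 then h (t2 - k) else 0)" if t2: "t2 < 2*k" for t2
  proof -
    have u3: "3 \<le> free_path (2*k) (Suc t2) i" by (rule free_path_bulk_ge_3[OF k i t2])
    have "band_mult (perturbation \<alpha> (Suc t2)) (first_order \<alpha> t2) (free_path (2*k) (Suc t2) i) i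
       = perturbation \<alpha> (Suc t2) (free_path (2*k) (Suc t2) i) (free_path (2*k) (Suc t2) i)
         * first_order \<alpha> t2 (free_path (2*k) (Suc t2) i) i"
      using band_mult_perturbation[of "free_path (2*k) (Suc t2) i" "Suc t2" \<alpha> "first_order \<alpha> t2" i]
        u3 first_order_switch[OF k i t2] by simp
    also have "\<dots> = perturbation \<alpha> (Suc t2) (free_path (2*k) (Suc t2) i) (free_path (2*k) (Suc t2) i) *
        (if k \<le> t2 then perturbation \<alpha> (Suc (t2-k)) (pos1_stay k i (t2-k) t2) (pos1_stay k i (t2-k) t2) else 0)"
      unfolding first_order_stay[OF k i t2] by (subst sum_delta_shift[OF k t2]) simp
    also have "\<dots> = (if k \<le> t2 then h (t2 - k) else 0)" unfolding h_def by auto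
    finally show ?thesis .
  qed
  have "second_order \<alpha> (2*k) i i = (\<Sum>t2<2*k. if k \<le> t2 then h (t2 - k) else 0)"
    unfolding second_order_eq by (rule sum.cong) (auto simp: step)
  also have "\<dots> = (\<Sum>t1<k. h t1)" by (rule sum_shift_half)
  also have "\<dots> = bulk_diag \<alpha> k i"
    unfolding bulk_diag_def sum_negf[symmetric] h_def
    by (rule sum.cong[OF refl]) (simp add: perturbation_pair_bulk[OF k i])
  finally show ?thesis .
qed

lemma sum_shift_support:
  fixes G :: "int \<Rightarrow> complex"
  assumes G0: "\<And>j. j < 0 \<Longrightarrow> G j = 0" and GN: "\<And>j. int Nj \<le> j \<Longrightarrow> G j = 0" and T: "Nj + c \<le> Ti"
  shows "(\<Sum>i<Ti. if P i then G (int i - int c) else 0) = (\<Sum>j<Nj. if P (j + c) then G (int j) else 0)"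
proof -
  let ?f = "\<lambda>i. if P i then G (int i - int c) else 0"
  have e: "{..<Ti} = {..<c} \<union> {c..<Ti}" using T by auto
  have "sum ?f {..<Ti} = sum ?f {..<c} + sum ?f {c..<Ti}" unfolding e by (rule sum.union_disjoint) auto
  also have "sum ?f {..<c} = 0" by (rule sum.neutral) (auto simp: G0)
  also have "sum ?f {c..<Ti} = sum ?f {0+c..<(Ti-c)+c}" using T by simp
  also have "\<dots> = (\<Sum>j\<in>{0..<Ti-c}. ?f (j + c))" by (rule sum.shift_bounds_nat_ivl)
  also have "\<dots> = (\<Sum>j<Nj. if P (j + c) then G (int j) else 0)"
  proof -
    have "(\<Sum>j\<in>{0..<Ti-c}. ?f (j + c)) = (\<Sum>j\<in>{0..<Ti-c}. if P (j + c) then G (int j) else 0)"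
      by (intro sum.cong refl) auto
    also have "\<dots> = (\<Sum>j\<in>{..<Nj}. if P (j + c) then G (int j) else 0)"
      by (rule sum.mono_neutral_right) (use T GN in auto)
    finally show ?thesis .
  qed
  finally show ?thesis by simp
qed

lemma sum_parity_count: "(\<Sum>t<k. (if odd (j+t) then x else 0) + (if even (j + k + 1 - t) then x else (0::complex))) = of_nat k * x"
proof -
  have "(\<Sum>t<k. (if even (j + k + 1 - t) then x else 0)) = (\<Sum>t<k. (if even (j + k + 1 - (k - Suc t)) then x else 0))"
    by (rule sum.nat_diff_reindex[symmetric])
  also have "\<dots> = (\<Sum>t<k. (if even (j + t) then x else 0))"
  proof (rule sum.cong[OF refl])
    fix t assume "t \<in> {..<k}"
    then have "j + k + 1 - (k - Suc t) = j + t + 2" by auto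
    then show "(if even (j + k + 1 - (k - Suc t)) then x else 0) = (if even (j + t) then x else 0)" by simp
  qed
  finally have "(\<Sum>t<k. (if odd (j+t) then x else 0) + (if even (j + k + 1 - t) then x else (0::complex)))
      = (\<Sum>t<k. (if odd (j+t) then x else 0) + (if even (j + t) then x else 0))"
    by (simp add: sum.distrib)
  also have "\<dots> = (\<Sum>t<k. x)" by (rule sum.cong) auto
  finally show ?thesis by simp
qed

lemma bulk_diag_sum:
  assumes N: "\<And>j. Nj \<le> j \<Longrightarrow> \<alpha> j = 0" and T: "Nj + k + 2 \<le> Ti"
  shows "(\<Sum>i<Ti. bulk_diag \<alpha> k i) = - of_nat k * (\<Sum>j<Nj. shifted_corr \<alpha> k (int j))"
proof -
  have G0: "\<And>j. j < 0 \<Longrightarrow> shifted_corr \<alpha> k j = 0" unfolding shifted_corr_def by simp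
  have GN: "\<And>j. int Nj \<le> j \<Longrightarrow> shifted_corr \<alpha> k j = 0" unfolding shifted_corr_def using N by (simp add: nat_le_iff)
  have A: "(\<Sum>i<Ti. if odd i then shifted_corr \<alpha> k (int i - int t - 2) else 0) = (\<Sum>j<Nj. if odd (j + t) then shifted_corr \<alpha> k (int j) else 0)" if t: "t < k" for t
  proof -
    have "(\<Sum>i<Ti. if odd i then shifted_corr \<alpha> k (int i - int t - 2) else 0)
        = (\<Sum>i<Ti. if odd i then shifted_corr \<alpha> k (int i - int (t+2)) else 0)"
      by (intro sum.cong refl) (simp add: algebra_simps)
    also have "\<dots> = (\<Sum>j<Nj. if odd (j + (t+2)) then shifted_corr \<alpha> k (int j) else 0)"
      by (rule sum_shift_support[OF G0 GN]) (use T t in auto)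
    also have "\<dots> = (\<Sum>j<Nj. if odd (j + t) then shifted_corr \<alpha> k (int j) else 0)" by (intro sum.cong refl) simp
    finally show ?thesis .
  qed
  have B: "(\<Sum>i<Ti. if \<not> odd i then shifted_corr \<alpha> k (int i + int t - int k - 1) else 0)
      = (\<Sum>j<Nj. if even (j + k + 1 - t) then shifted_corr \<alpha> k (int j) else 0)" if t: "t < k" for t
  proof -
    have "(\<Sum>i<Ti. if \<not> odd i then shifted_corr \<alpha> k (int i + int t - int k - 1) else 0)
        = (\<Sum>i<Ti. if \<not> odd i then shifted_corr \<alpha> k (int i - int (k + 1 - t)) else 0)"
      using t by (intro sum.cong) (auto simp: of_nat_diff algebra_simps)
    also have "\<dots> = (\<Sum>j<Nj. if \<not> odd (j + (k + 1 - t)) then shifted_corr \<alpha> k (int j) else 0)"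
      by (rule sum_shift_support[OF G0 GN]) (use T t in auto)
    also have "\<dots> = (\<Sum>j<Nj. if even (j + k + 1 - t) then shifted_corr \<alpha> k (int j) else 0)"
    proof (intro sum.cong refl)
      fix j have "j + (k + 1 - t) = j + k + 1 - t" using t by arith
      then show "(if \<not> odd (j + (k + 1 - t)) then shifted_corr \<alpha> k (int j) else 0) = (if even (j + k + 1 - t) then shifted_corr \<alpha> k (int j) else 0)" by simp
    qed
    finally show ?thesis .
  qed
  have "(\<Sum>i<Ti. bulk_diag \<alpha> k i) = - (\<Sum>t<k. \<Sum>i<Ti. (if odd i then shifted_corr \<alpha> k (int i - int t - 2) else 0)
      + (if \<not> odd i then shifted_corr \<alpha> k (int i + int t - int k - 1) else 0))"
    unfolding bulk_diag_def sum_negf by (subst sum.swap) (auto intro!: sum.cong)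
  also have "\<dots> = - (\<Sum>t<k. \<Sum>j<Nj. (if odd (j + t) then shifted_corr \<alpha> k (int j) else 0)
      + (if even (j + k + 1 - t) then shifted_corr \<alpha> k (int j) else 0))"
  proof -
    have "(\<Sum>i<Ti. (if odd i then shifted_corr \<alpha> k (int i - int t - 2) else 0) + (if \<not> odd i then shifted_corr \<alpha> k (int i + int t - int k - 1) else 0))
      = (\<Sum>j<Nj. (if odd (j + t) then shifted_corr \<alpha> k (int j) else 0) + (if even (j + k + 1 - t) then shifted_corr \<alpha> k (int j) else 0))" if "t < k" for t
      unfolding sum.distrib A[OF that] B[OF that] by (simp only: sum.distrib)
    then show ?thesis by (auto intro!: sum.cong)
  qed
  also have "\<dots> = - (\<Sum>j<Nj. of_nat k * shifted_corr \<alpha> k (int j))"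
    by (subst sum.swap, rule arg_cong[where f=uminus], rule sum.cong[OF refl], rule sum_parity_count)
  finally show ?thesis by (simp add: sum_distrib_left sum_negf)
qed

section \<open>Finitely supported coefficients\<close>

lemma sum_le_sum_lessThan_support:
  fixes f :: "nat \<Rightarrow> real"
  assumes "finite Z" "\<And>z. M \<le> z \<Longrightarrow> f z = 0" "\<And>z. 0 \<le> f z"
  shows "sum f Z \<le> (\<Sum>z<M. f z)"
proof -
  have "sum f Z = sum f (Z \<inter> {..<M})"
    by (rule sum.mono_neutral_right) (use assms in \<open>auto simp: not_less\<close>)
  also have "\<dots> \<le> (\<Sum>z<M. f z)" by (rule sum_mono2) (use assms in auto)
  finally show ?thesis .
qed

lemma sum_local_size_cube_le:
  assumes N: "\<And>j. Nj \<le> j \<Longrightarrow> \<alpha> j = 0" and Z: "finite Z"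
  shows "(\<Sum>z\<in>Z. local_size \<alpha> z ^ 3) \<le> 20 * (\<Sum>j<Nj+2. (cmod (\<alpha> j))^3)"
proof -
  let ?S = "(\<Sum>j<Nj+2. (cmod (\<alpha> j))^3)"
  have "(\<Sum>z\<in>Z. local_size \<alpha> z ^ 3) \<le> (\<Sum>z<Nj+2. (local_size \<alpha> z)^3)"
    by (rule sum_le_sum_lessThan_support[OF Z]) (use N in \<open>auto simp: local_size_def\<close>)
  also have "\<dots> \<le> (\<Sum>z<Nj+2. 4 * ((cmod (\<alpha> (z-1)))^3 + (cmod (\<alpha> (z-2)))^3))"
    unfolding local_size_def by (rule sum_mono) (rule power3_add_le, auto)
  also have "\<dots> = 4 * ((\<Sum>z<Nj+2. (cmod (\<alpha> (z-1)))^3) + (\<Sum>z<Nj+2. (cmod (\<alpha> (z-2)))^3))"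
    by (simp add: sum.distrib sum_distrib_left)
  also have "(\<Sum>z<Nj+2. (cmod (\<alpha> (z-1)))^3) \<le> 2 * ?S"
  proof -
    have "(\<Sum>z<Nj+2. (cmod (\<alpha> (z-1)))^3) = (cmod (\<alpha> 0))^3 + (\<Sum>z<Nj+1. (cmod (\<alpha> z))^3)"
      using sum.lessThan_Suc_shift[of "\<lambda>z. (cmod (\<alpha> (z-1)))^3" "Nj+1"] by simp
    also have "\<dots> \<le> ?S + ?S"
    proof (rule add_mono)
      show "(cmod (\<alpha> 0))^3 \<le> ?S" by (rule member_le_sum) auto
      show "(\<Sum>z<Nj+1. (cmod (\<alpha> z))^3) \<le> ?S" by (rule sum_lessThan_mono) auto
    qed
    finally show ?thesis by simp
  qed
  also have "(\<Sum>z<Nj+2. (cmod (\<alpha> (z-2)))^3) \<le> 3 * ?S"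
  proof -
    have "(\<Sum>z<Nj+2. (cmod (\<alpha> (z-2)))^3) = (cmod (\<alpha> 0))^3 + (cmod (\<alpha> 0))^3 + (\<Sum>z<Nj. (cmod (\<alpha> z))^3)"
      using sum.lessThan_Suc_shift[of "\<lambda>z. (cmod (\<alpha> (z-2)))^3" "Nj+1"]
            sum.lessThan_Suc_shift[of "\<lambda>z. (cmod (\<alpha> (Suc z-2)))^3" "Nj"] by simp
    also have "\<dots> \<le> ?S + ?S + ?S"
    proof (intro add_mono)
      show "(cmod (\<alpha> 0))^3 \<le> ?S" by (rule member_le_sum) auto
      then show "(cmod (\<alpha> 0))^3 \<le> ?S" .
      show "(\<Sum>z<Nj. (cmod (\<alpha> z))^3) \<le> ?S" by (rule sum_lessThan_mono) auto
    qed
    finally show ?thesis by simp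
  qed
  finally show ?thesis by simp
qed

lemma cmv_factor_beyond_support:
  assumes N: "\<And>j. Nj \<le> j \<Longrightarrow> \<alpha> j = 0" and x: "Nj + 2 \<le> x"
  shows "cmv_factor \<alpha> s x l = cmv_factor (\<lambda>_. 0) s x l"
proof -
  have b: "block_coeff \<alpha> s x = 0" unfolding block_coeff_def using N x by auto
  have x1: "1 \<le> x" "\<not> (x = 1 \<and> odd s)" using x by auto
  have b0: "block_coeff (\<lambda>_. 0) s x = 0" by (simp add: block_coeff_def)
  show ?thesis using cmv_factor_entry[OF x1, of \<alpha> l] cmv_factor_entry[OF x1, of "\<lambda>_. 0" l] b b0 by simp
qed

lemma cmv_partial_beyond_support:
  assumes N: "\<And>j. Nj \<le> j \<Longrightarrow> \<alpha> j = 0"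
  shows "Nj + 2 + s \<le> x \<Longrightarrow> cmv_partial \<alpha> s x y = (if y = free_path s 0 x then 1 else 0)"
proof (induction s arbitrary: x)
  case 0 then show ?case by (auto simp: mat_id_def)
next
  case (Suc s)
  have "cmv_partial \<alpha> (Suc s) x y = band_mult (cmv_factor \<alpha> (Suc s)) (cmv_partial \<alpha> s) x y" by simp
  also have "\<dots> = band_mult (free_factor (Suc s)) (cmv_partial \<alpha> s) x y"
  proof -
    have "\<And>l. cmv_factor \<alpha> (Suc s) x l = free_factor (Suc s) x l" using cmv_factor_beyond_support[of Nj \<alpha> x "Suc s"] N Suc.prems by simp
    then show ?thesis unfolding band_mult_def by simp
  qed
  also have "\<dots> = cmv_partial \<alpha> s (partner (Suc s) x) y" using Suc.prems by (simp add: band_mult_free_factor)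
  also have "\<dots> = (if y = free_path s 0 (partner (Suc s) x) then 1 else 0)"
  proof (rule Suc.IH)
    show "Nj + 2 + s \<le> partner (Suc s) x" using Suc.prems unfolding partner_def by auto
  qed
  also have "free_path s 0 (partner (Suc s) x) = free_path (Suc s) 0 x" by simp
  finally show ?case .
qed

lemma cmv_partial_row0: "cmv_partial \<alpha> (Suc s) 0 y = 0"
  by (simp add: band_mult_def cmv_factor_row0)

lemma trace_cmv_pow_eq_sum:
  assumes N: "\<And>j. Nj \<le> j \<Longrightarrow> \<alpha> j = 0" and k: "1 \<le> k"
  shows "mat_trace (mat_pow (cmv \<alpha>) k) = (\<Sum>i<Nj+2*k+3. cmv_partial \<alpha> (2*k) i i)"
proof -
  let ?T = "Nj+2*k+3"
  have z: "cmv_partial \<alpha> (2*k) i i = 0" if "?T \<le> i" for i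
  proof -
    have "free_path (2*k) 0 i = (if odd (i + 2*k) then i + 2*k else i - 2*k)"
      using free_path_bulk[of 0 "2*k" i] that by simp
    then have "free_path (2*k) 0 i \<noteq> i" using k that by auto
    then show ?thesis using cmv_partial_beyond_support[of Nj \<alpha> "2*k" i i] N that by simp
  qed
  have z0: "cmv_partial \<alpha> (2*k) 0 0 = 0" using k cmv_partial_row0[of \<alpha> "2*k-1" 0] by (cases "2*k") auto
  have "mat_trace (mat_pow (cmv \<alpha>) k) = (\<Sum>\<^sub>\<infinity> i\<in>{1..}. cmv_partial \<alpha> (2*k) i i)"
    unfolding mat_trace_def mat_pow_cmv_eq_partial ..
  also have "\<dots> = (\<Sum>\<^sub>\<infinity> i\<in>{..<?T}. cmv_partial \<alpha> (2*k) i i)"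
    by (rule infsum_cong_neutral) (use z z0 in \<open>auto simp: not_le less_Suc0\<close>)
  also have "\<dots> = (\<Sum>i<?T. cmv_partial \<alpha> (2*k) i i)" by simp
  finally show ?thesis .
qed

section \<open>The main term\<close>

lemma infsum_from_minus1:
  fixes F :: "int \<Rightarrow> 'a::{comm_monoid_add,t2_space}"
  assumes "\<And>j. int M \<le> j \<Longrightarrow> F j = 0"
  shows "(\<Sum>\<^sub>\<infinity> j\<in>{-1::int..}. F j) = F (-1) + (\<Sum>j<M. F (int j))"
proof -
  have "(\<Sum>\<^sub>\<infinity> j\<in>{-1::int..}. F j) = (\<Sum>\<^sub>\<infinity> j\<in>{-1..<int M}. F j)"
    by (rule infsum_cong_neutral) (use assms in auto)
  also have "\<dots> = (\<Sum>j\<in>{-1..<int M}. F j)" by simp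
  also have "{-1..<int M} = insert (-1) (int ` {..<M})"
  proof -
    have memb: "j \<in> int ` {..<M}" if "0 \<le> j" "j < int M" for j
      using that by (metis imageI lessThan_iff nat_less_iff nonneg_int_cases of_nat_less_iff)
    show ?thesis
    proof (rule set_eqI)
      fix j :: int
      show "j \<in> {-1..<int M} \<longleftrightarrow> j \<in> insert (-1) (int ` {..<M})"
      proof
        assume "j \<in> {-1..<int M}"
        then have "j = -1 \<or> (0 \<le> j \<and> j < int M)" by auto
        then show "j \<in> insert (-1) (int ` {..<M})" using memb by blast
      next
        assume "j \<in> insert (-1) (int ` {..<M})"
        then show "j \<in> {-1..<int M}" by auto
      qed
    qed
  qed
  also have "(\<Sum>j\<in>insert (-1) (int ` {..<M}). F j) = F (-1) + (\<Sum>j\<in>int ` {..<M}. F j)"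
    by (rule sum.insert) auto
  also have "(\<Sum>j\<in>int ` {..<M}. F j) = (\<Sum>j<M. F (int j))" by (rule sum.reindex_cong[of int]) auto
  finally show ?thesis .
qed

lemma alpha_ext_nat: "alpha_ext \<alpha> (int j) = \<alpha> j"
  unfolding alpha_ext_def by simp

lemma norm_alpha_ext_le_1: "\<forall>j. cmod (\<alpha> j) < 1 \<Longrightarrow> cmod (alpha_ext \<alpha> j) \<le> 1"
  unfolding alpha_ext_def by (auto intro: less_imp_le)

lemma infsum_alpha_ext_cube:
  assumes N: "\<And>j. Nj \<le> j \<Longrightarrow> \<alpha> j = 0"
  shows "(\<Sum>\<^sub>\<infinity> j\<in>{-1::int..}. cmod (alpha_ext \<alpha> j) ^ 3) = 1 + (\<Sum>j<Nj+2. (cmod (\<alpha> j))^3)"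
proof -
  have "(\<Sum>\<^sub>\<infinity> j\<in>{-1::int..}. cmod (alpha_ext \<alpha> j) ^ 3) = cmod (alpha_ext \<alpha> (-1)) ^ 3 + (\<Sum>j<Nj+2. cmod (alpha_ext \<alpha> (int j)) ^ 3)"
  proof (rule infsum_from_minus1)
    fix j :: int assume "int (Nj+2) \<le> j"
    then show "cmod (alpha_ext \<alpha> j) ^ 3 = 0" using N[of "nat j"] unfolding alpha_ext_def by auto
  qed
  then show ?thesis by (simp add: alpha_ext_nat alpha_ext_def)
qed

lemma abs_1_minus_prod_le:
  fixes x :: "'i \<Rightarrow> real"
  assumes "finite I" "\<And>i. i \<in> I \<Longrightarrow> 0 \<le> x i \<and> x i \<le> 1"
  shows "\<bar>1 - prod x I\<bar> \<le> (\<Sum>i\<in>I. 1 - x i)"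
  using assms
proof (induction I rule: finite_induct)
  case empty then show ?case by simp
next
  case (insert a I)
  have p: "0 \<le> prod x I" "prod x I \<le> 1" using insert by (auto intro: prod_nonneg prod_le_1)
  have xa: "0 \<le> x a" "x a \<le> 1" using insert by auto
  have ih: "\<bar>1 - prod x I\<bar> \<le> (\<Sum>i\<in>I. 1 - x i)" using insert by auto
  have "\<bar>1 - x a * prod x I\<bar> = 1 - x a * prod x I" using p xa by (simp add: mult_le_one)
  also have "\<dots> = (1 - x a) + x a * (1 - prod x I)" by (simp add: algebra_simps)
  also have "\<dots> \<le> (1 - x a) + (1 - prod x I)" using p xa by (simp add: mult_left_le_one_le)
  also have "\<dots> \<le> (1 - x a) + (\<Sum>i\<in>I. 1 - x i)" using ih p by auto
  finally show ?case using insert by simp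
qed

definition main_term :: "(nat\<Rightarrow>complex) \<Rightarrow> nat \<Rightarrow> int \<Rightarrow> complex" where
  "main_term \<alpha> k j = cnj (alpha_ext \<alpha> j)
       * (\<Prod>i\<in>{1..int k - 1}. complex_of_real ((rho (alpha_ext \<alpha> (j + i)))^2))
       * alpha_ext \<alpha> (j + int k)"

lemma norm_alpha_ext_sq_le_1: "\<forall>j. cmod (\<alpha> j) < 1 \<Longrightarrow> (cmod (alpha_ext \<alpha> j))^2 \<le> 1"
  using norm_alpha_ext_le_1 by (simp add: power_le_one)

lemma prod_rho_sq_bounds:
  assumes "\<forall>j. cmod (\<alpha> j) < 1"
  shows "0 \<le> (\<Prod>i\<in>I. (rho (alpha_ext \<alpha> (j + i)))^2) \<and> (\<Prod>i\<in>I. (rho (alpha_ext \<alpha> (j + i)))^2) \<le> 1"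
proof -
  have "\<And>i. 0 \<le> (rho (alpha_ext \<alpha> (j + i)))^2 \<and> (rho (alpha_ext \<alpha> (j + i)))^2 \<le> 1"
    using rho_sq[OF norm_alpha_ext_le_1[OF assms]] norm_alpha_ext_sq_le_1[OF assms] by simp
  then show ?thesis by (auto intro: prod_nonneg prod_le_1)
qed

lemma prod_of_real_rho_sq: "(\<Prod>i\<in>I. complex_of_real ((rho (alpha_ext \<alpha> (j + i)))^2)) = of_real (\<Prod>i\<in>I. (rho (alpha_ext \<alpha> (j + i)))^2)"
  by simp

lemma norm_main_term_minus1_le: assumes "\<forall>j. cmod (\<alpha> j) < 1" shows "cmod (main_term \<alpha> k (-1)) \<le> 1"
proof -
  have p: "\<bar>\<Prod>i\<in>{1..int k - 1}. (rho (alpha_ext \<alpha> (-1 + i)))^2\<bar> \<le> 1"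
    using prod_rho_sq_bounds[OF assms, of "-1" "{1..int k - 1}"] by (subst abs_of_nonneg) auto
  have a: "cmod (alpha_ext \<alpha> (-1 + int k)) \<le> 1" by (rule norm_alpha_ext_le_1[OF assms])
  have c: "cmod (cnj (alpha_ext \<alpha> (-1))) = 1" by (simp add: alpha_ext_def)
  have pc: "cmod (\<Prod>i\<in>{1..int k - 1}. complex_of_real ((rho (alpha_ext \<alpha> (-1 + i)))^2)) \<le> 1"
    using p by (simp only: prod_of_real_rho_sq norm_of_real)
  have "cmod (main_term \<alpha> k (-1)) = cmod (\<Prod>i\<in>{1..int k - 1}. complex_of_real ((rho (alpha_ext \<alpha> (-1 + i)))^2)) * cmod (alpha_ext \<alpha> (-1 + int k))"
    unfolding main_term_def norm_mult c by simp
  also have "\<dots> \<le> 1" using pc a by (intro mult_le_one) auto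
  finally show ?thesis .
qed

lemma norm_main_term_minus_corr_le:
  assumes \<alpha>: "\<forall>j. cmod (\<alpha> j) < 1"
  shows "cmod (main_term \<alpha> k (int j) - shifted_corr \<alpha> k (int j)) \<le> (\<Sum>i\<in>{1..int k - 1}. (cmod (\<alpha> j))^3 + 2 * (cmod (alpha_ext \<alpha> (int j + i)))^3)"
proof -
  let ?I = "{1..int k - 1}"
  let ?P = "\<Prod>i\<in>?I. (rho (alpha_ext \<alpha> (int j + i)))^2"
  have e: "main_term \<alpha> k (int j) - shifted_corr \<alpha> k (int j) = cnj (\<alpha> j) * \<alpha> (j+k) * (of_real ?P - 1)"
    unfolding main_term_def prod_of_real_rho_sq shifted_corr_def by (simp add: alpha_ext_nat algebra_simps flip: of_nat_add)
  have a1: "cmod (\<alpha> (j+k)) \<le> 1" using \<alpha> less_imp_le by blast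
  have "\<bar>1 - ?P\<bar> \<le> (\<Sum>i\<in>?I. 1 - (rho (alpha_ext \<alpha> (int j + i)))^2)"
    by (rule abs_1_minus_prod_le) (use rho_sq[OF norm_alpha_ext_le_1[OF \<alpha>]] norm_alpha_ext_sq_le_1[OF \<alpha>] in auto)
  also have "\<dots> = (\<Sum>i\<in>?I. (cmod (alpha_ext \<alpha> (int j + i)))^2)"
    using rho_sq[OF norm_alpha_ext_le_1[OF \<alpha>]] by simp
  finally have pb: "\<bar>1 - ?P\<bar> \<le> (\<Sum>i\<in>?I. (cmod (alpha_ext \<alpha> (int j + i)))^2)" .
  have "cmod (main_term \<alpha> k (int j) - shifted_corr \<alpha> k (int j)) = cmod (\<alpha> j) * cmod (\<alpha> (j+k)) * \<bar>?P - 1\<bar>"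
  proof -
    have o: "(of_real ?P - 1 :: complex) = of_real (?P - 1)" by simp
    show ?thesis unfolding e norm_mult o norm_of_real by simp
  qed
  also have "\<dots> = cmod (\<alpha> j) * cmod (\<alpha> (j+k)) * \<bar>1 - ?P\<bar>" by (simp add: abs_minus_commute)
  also have "\<dots> \<le> cmod (\<alpha> j) * 1 * \<bar>1 - ?P\<bar>"
    by (intro mult_right_mono mult_left_mono a1) auto
  also have "\<dots> \<le> cmod (\<alpha> j) * (\<Sum>i\<in>?I. (cmod (alpha_ext \<alpha> (int j + i)))^2)"
    using pb by (simp add: mult_left_mono)
  also have "\<dots> = (\<Sum>i\<in>?I. cmod (\<alpha> j) * cmod (alpha_ext \<alpha> (int j + i)) * cmod (alpha_ext \<alpha> (int j + i)))"
    by (simp add: sum_distrib_left power2_eq_square mult.assoc)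
  also have "\<dots> \<le> (\<Sum>i\<in>?I. (cmod (\<alpha> j))^3 + 2 * (cmod (alpha_ext \<alpha> (int j + i)))^3)"
  proof (rule sum_mono)
    fix i
    have "cmod (\<alpha> j) * cmod (alpha_ext \<alpha> (int j + i)) * cmod (alpha_ext \<alpha> (int j + i))
      \<le> (cmod (\<alpha> j))^3 + (cmod (alpha_ext \<alpha> (int j + i)))^3 + (cmod (alpha_ext \<alpha> (int j + i)))^3"
      by (rule mult3_le_sum_power3) auto
    then show "cmod (\<alpha> j) * cmod (alpha_ext \<alpha> (int j + i)) * cmod (alpha_ext \<alpha> (int j + i))
      \<le> (cmod (\<alpha> j))^3 + 2 * (cmod (alpha_ext \<alpha> (int j + i)))^3" by simp
  qed
  finally show ?thesis .
qed

lemma sum_main_term_minus_corr_le: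
  assumes \<alpha>: "\<forall>j. cmod (\<alpha> j) < 1" and N: "\<And>j. Nj \<le> j \<Longrightarrow> \<alpha> j = 0"
  shows "(\<Sum>j<Nj. cmod (main_term \<alpha> k (int j) - shifted_corr \<alpha> k (int j))) \<le> 3 * real k * (\<Sum>j<Nj+2. (cmod (\<alpha> j))^3)"
proof -
  let ?I = "{1..int k - 1}"
  let ?S = "\<Sum>j<Nj+2. (cmod (\<alpha> j))^3"
  have S0: "0 \<le> ?S" by (simp add: sum_nonneg)
  have sh: "(\<Sum>j<Nj. (cmod (alpha_ext \<alpha> (int j + i)))^3) \<le> ?S" if "i \<in> ?I" for i
  proof -
    have "(\<Sum>j<Nj. (cmod (alpha_ext \<alpha> (int j + i)))^3) = (\<Sum>j<Nj. (cmod (\<alpha> (j + nat i)))^3)"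
      using that by (intro sum.cong refl) (simp add: alpha_ext_def nat_add_distrib)
    also have "\<dots> = (\<Sum>z\<in>(\<lambda>j. j + nat i) ` {..<Nj}. (cmod (\<alpha> z))^3)"
      by (simp add: sum.reindex)
    also have "\<dots> \<le> ?S" by (rule sum_le_sum_lessThan_support) (use N in auto)
    finally show ?thesis .
  qed
  have "(\<Sum>j<Nj. cmod (main_term \<alpha> k (int j) - shifted_corr \<alpha> k (int j)))
      \<le> (\<Sum>j<Nj. \<Sum>i\<in>?I. (cmod (\<alpha> j))^3 + 2 * (cmod (alpha_ext \<alpha> (int j + i)))^3)"
    by (rule sum_mono) (rule norm_main_term_minus_corr_le[OF \<alpha>])
  also have "\<dots> = (\<Sum>i\<in>?I. (\<Sum>j<Nj. (cmod (\<alpha> j))^3) + 2 * (\<Sum>j<Nj. (cmod (alpha_ext \<alpha> (int j + i)))^3))"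
    by (subst sum.swap) (simp add: sum.distrib sum_distrib_left)
  also have "\<dots> \<le> (\<Sum>i\<in>?I. ?S + 2 * ?S)"
  proof (rule sum_mono)
    fix i assume i: "i \<in> ?I"
    have "(\<Sum>j<Nj. (cmod (\<alpha> j))^3) \<le> ?S" by (rule sum_lessThan_mono) auto
    then show "(\<Sum>j<Nj. (cmod (\<alpha> j))^3) + 2 * (\<Sum>j<Nj. (cmod (alpha_ext \<alpha> (int j + i)))^3) \<le> ?S + 2 * ?S"
      using sh[OF i] by linarith
  qed
  also have "\<dots> = real (card ?I) * (3 * ?S)" by simp
  also have "\<dots> \<le> real k * (3 * ?S)" by (intro mult_right_mono) (use S0 in auto)
  finally show ?thesis by (simp only: mult.assoc mult.left_commute)
qed

lemma infsum_main_term: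
  assumes N: "\<And>j. Nj \<le> j \<Longrightarrow> \<alpha> j = 0"
  shows "(\<Sum>\<^sub>\<infinity> j\<in>{-1::int..}. main_term \<alpha> k j) = main_term \<alpha> k (-1) + (\<Sum>j<Nj. main_term \<alpha> k (int j))"
proof (rule infsum_from_minus1)
  fix j :: int assume "int Nj \<le> j"
  then have "alpha_ext \<alpha> j = 0" using N[of "nat j"] unfolding alpha_ext_def by auto
  then show "main_term \<alpha> k j = 0" unfolding main_term_def by simp
qed

lemma norm_shifted_corr_le_1: assumes "\<forall>j. cmod (\<alpha> j) < 1" shows "cmod (shifted_corr \<alpha> k j) \<le> 1"
proof -
  have "cmod (\<alpha> a) * cmod (\<alpha> b) \<le> 1" for a b
    using assms by (intro mult_le_one) (auto intro: less_imp_le)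
  then show ?thesis unfolding shifted_corr_def by (simp add: norm_mult)
qed

lemma norm_bulk_diag_le: assumes "\<forall>j. cmod (\<alpha> j) < 1" shows "cmod (bulk_diag \<alpha> k i) \<le> real k"
proof -
  have "cmod (bulk_diag \<alpha> k i) \<le> (\<Sum>t<k. cmod (if odd i then shifted_corr \<alpha> k (int i - int t - 2) else shifted_corr \<alpha> k (int i + int t - int k - 1)))"
    unfolding bulk_diag_def norm_minus_cancel by (rule norm_sum)
  also have "\<dots> \<le> (\<Sum>t<k. 1)" by (rule sum_mono) (simp add: norm_shifted_corr_le_1[OF assms])
  finally show ?thesis by simp
qed

lemma bulk_diag_error:
  assumes "1 \<le> k" "2*k+3 \<le> i"
  shows "cmv_partial \<alpha> (2*k) i i - bulk_diag \<alpha> k i = remainder \<alpha> (2*k) i i"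
  using cmv_partial_split[of \<alpha> "2*k" i i] free_part_bulk_diag[OF assms] first_order_bulk_diag[OF assms] second_order_bulk_diag[OF assms] by simp

lemma powers_le_cube:
  fixes x :: real
  assumes "1 \<le> x"
  shows "1 \<le> x ^ 3" "x \<le> x ^ 3" "x ^ 2 \<le> x ^ 3"
  using power_increasing[OF _ assms, of 0 3] power_increasing[OF _ assms, of 1 3]
    power_increasing[OF _ assms, of 2 3] by simp_all

lemma norm_diag_minus_bulk_diag_le:
  assumes \<alpha>: "\<forall>j. cmod (\<alpha> j) < 1" and k: "1 \<le> k"
  shows "cmod (cmv_partial \<alpha> (2*k) i i - bulk_diag \<alpha> k i)
     \<le> (if i < 2*k+3 then 1 + real k else 0) + cmod (remainder \<alpha> (2*k) i i)"
proof (cases "i < 2*k+3")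
  case True
  have "cmod (cmv_partial \<alpha> (2*k) i i - bulk_diag \<alpha> k i) \<le> 1 + real k"
    using norm_triangle_ineq4 norm_cmv_partial_le_1[OF \<alpha>] norm_bulk_diag_le[OF \<alpha>]
    by (rule order_trans[OF _ add_mono])
  then show ?thesis using True by (simp add: add_increasing2)
qed (simp add: bulk_diag_error[OF k])

lemma trace_plus_corr_eq_sum:
  assumes N: "\<And>j. Nj \<le> j \<Longrightarrow> \<alpha> j = 0" and k: "1 \<le> k"
  shows "mat_trace (mat_pow (cmv \<alpha>) k) + of_nat k * (\<Sum>j<Nj. shifted_corr \<alpha> k (int j))
      = (\<Sum>i<Nj+2*k+3. cmv_partial \<alpha> (2*k) i i - bulk_diag \<alpha> k i)"
proof -
  have T: "Nj + k + 2 \<le> Nj+2*k+3" by simp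
  have "(\<Sum>i<Nj+2*k+3. bulk_diag \<alpha> k i) = - of_nat k * (\<Sum>j<Nj. shifted_corr \<alpha> k (int j))"
    by (rule bulk_diag_sum[OF N T])
  then show ?thesis using trace_cmv_pow_eq_sum[of Nj \<alpha>, OF N k] by (simp add: sum_subtractf)
qed

lemma trace_bulk_error:
  assumes \<alpha>: "\<forall>j. cmod (\<alpha> j) < 1" and N: "\<And>j. Nj \<le> j \<Longrightarrow> \<alpha> j = 0" and k: "1 \<le> k"
  shows "cmod (mat_trace (mat_pow (cmv \<alpha>) k) + of_nat k * (\<Sum>j<Nj. shifted_corr \<alpha> k (int j)))
     \<le> 10 * real k ^ 3 + 12960 * real k ^ 3 * (\<Sum>j<Nj+2. cmod (\<alpha> j) ^ 3)"
proof -
  define T where "T = Nj + 2*k + 3"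
  define B where "B = 2*k + 3"
  define S3 where "S3 = (\<Sum>j<Nj+2. cmod (\<alpha> j) ^ 3)"
  have r: "1 \<le> real k" using k by simp
  have "mat_trace (mat_pow (cmv \<alpha>) k) + of_nat k * (\<Sum>j<Nj. shifted_corr \<alpha> k (int j))
      = (\<Sum>i<T. cmv_partial \<alpha> (2*k) i i - bulk_diag \<alpha> k i)"
    unfolding T_def by (rule trace_plus_corr_eq_sum[OF _ k]) (rule N)
  also have "cmod \<dots> \<le> (\<Sum>i<T. (if i < B then 1 + real k else 0) + cmod (remainder \<alpha> (2*k) i i))"
    unfolding B_def by (intro order_trans[OF norm_sum sum_mono] norm_diag_minus_bulk_diag_le[OF \<alpha> k])
  also have "\<dots> = real B * (1 + real k) + (\<Sum>i<T. cmod (remainder \<alpha> (2*k) i i))"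
  proof -
    have "{..<T} = {..<B} \<union> {B..<T}" "{..<B} \<inter> {B..<T} = {}" by (auto simp: T_def B_def)
    then have "(\<Sum>i<T. if i < B then 1 + real k else 0) = (\<Sum>i<B. 1 + real k)"
      by (simp add: sum.union_disjoint)
    then show ?thesis by (simp add: sum.distrib)
  qed
  also have "\<dots> \<le> 10 * real k ^ 3 + 12960 * real k ^ 3 * S3"
  proof (rule add_mono)
    have "real B * (1 + real k) = 2 * real k ^ 2 + 5 * real k + 3"
      by (simp add: B_def algebra_simps power2_eq_square)
    also have "\<dots> \<le> 10 * real k ^ 3"
      using powers_le_cube[OF r] by linarith
    finally show "real B * (1 + real k) \<le> 10 * real k ^ 3" .
    have "(\<Sum>i<T. cmod (remainder \<alpha> (2*k) i i)) \<le> 81 * (real (2*k))^3 * (20 * S3)"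
      by (rule remainder_diag_sum_le[OF \<alpha>]) (use sum_local_size_cube_le[OF N] in \<open>simp add: S3_def\<close>)
    then show "(\<Sum>i<T. cmod (remainder \<alpha> (2*k) i i)) \<le> 12960 * real k ^ 3 * S3"
      by (simp add: power_mult_distrib)
  qed
  finally show ?thesis unfolding S3_def .
qed

lemma main_term_error:
  assumes \<alpha>: "\<forall>j. cmod (\<alpha> j) < 1" and N: "\<And>j. Nj \<le> j \<Longrightarrow> \<alpha> j = 0" and k: "1 \<le> k"
  shows "cmod (of_nat k * (\<Sum>\<^sub>\<infinity> j\<in>{-1::int..}. main_term \<alpha> k j) - of_nat k * (\<Sum>j<Nj. shifted_corr \<alpha> k (int j)))
     \<le> real k ^ 3 + 3 * real k ^ 3 * (\<Sum>j<Nj+2. cmod (\<alpha> j) ^ 3)"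
proof -
  define S3 where "S3 = (\<Sum>j<Nj+2. cmod (\<alpha> j) ^ 3)"
  have S3: "0 \<le> S3" by (simp add: S3_def sum_nonneg)
  have r: "1 \<le> real k" using k by simp
  have "of_nat k * (\<Sum>\<^sub>\<infinity> j\<in>{-1::int..}. main_term \<alpha> k j) - of_nat k * (\<Sum>j<Nj. shifted_corr \<alpha> k (int j))
      = of_nat k * (main_term \<alpha> k (-1) + (\<Sum>j<Nj. main_term \<alpha> k (int j) - shifted_corr \<alpha> k (int j)))"
    by (simp add: infsum_main_term[of Nj \<alpha>, OF N] sum_subtractf algebra_simps)
  also have "cmod \<dots> \<le> real k * (cmod (main_term \<alpha> k (-1))
      + (\<Sum>j<Nj. cmod (main_term \<alpha> k (int j) - shifted_corr \<alpha> k (int j))))"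
    unfolding norm_mult norm_of_nat
    by (intro mult_left_mono order.trans[OF norm_triangle_ineq add_left_mono[OF norm_sum]]) auto
  also have "\<dots> \<le> real k * (1 + 3 * real k * S3)"
    using norm_main_term_minus1_le[OF \<alpha>] sum_main_term_minus_corr_le[of \<alpha> Nj k, OF \<alpha> N]
    unfolding S3_def by (intro mult_left_mono add_mono) auto
  also have "\<dots> \<le> real k ^ 3 + 3 * real k ^ 3 * S3"
  proof -
    have "real k \<le> real k ^ 3" "real k ^ 2 \<le> real k ^ 3" using powers_le_cube[OF r] by linarith+
    moreover have "real k * (1 + 3 * real k * S3) = real k + 3 * (real k ^ 2 * S3)"
      by (simp add: algebra_simps power2_eq_square)
    moreover have "real k ^ 2 * S3 \<le> real k ^ 3 * S3" using calculation(2) S3 by (rule mult_right_mono)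
    ultimately show ?thesis by linarith
  qed
  finally show ?thesis unfolding S3_def .
qed

theorem lemma3p3:
  "\<exists>K::real. \<forall>(\<alpha>::nat \<Rightarrow> complex) (k::nat).
     (\<forall>j. cmod (\<alpha> j) < 1) \<longrightarrow> finite {j. \<alpha> j \<noteq> 0} \<longrightarrow> 2 \<le> k \<longrightarrow>
     cmod (mat_trace (mat_pow (cmv \<alpha>) k)
           - (- of_nat k * (\<Sum>\<^sub>\<infinity> j\<in>{-1::int..}.
                 cnj (alpha_ext \<alpha> j)
                 * (\<Prod>i\<in>{1..int k - 1}. complex_of_real ((rho (alpha_ext \<alpha> (j + i)))^2))
                 * alpha_ext \<alpha> (j + int k))))
     \<le> K * real k ^ 3 * (\<Sum>\<^sub>\<infinity> j\<in>{-1::int..}. cmod (alpha_ext \<alpha> j) ^ 3)"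
proof (intro exI[of _ 13000] allI impI)
  fix \<alpha> :: "nat \<Rightarrow> complex" and k :: nat
  assume \<alpha>: "\<forall>j. cmod (\<alpha> j) < 1" and fin: "finite {j. \<alpha> j \<noteq> 0}" and k: "2 \<le> k"
  obtain Nj where "{j. \<alpha> j \<noteq> 0} \<subseteq> {..<Nj}" using finite_nat_bounded[OF fin] by blast
  then have N: "\<And>j. Nj \<le> j \<Longrightarrow> \<alpha> j = 0" by force
  define S3 where "S3 = (\<Sum>j<Nj+2. cmod (\<alpha> j) ^ 3)"
  define G where "G = (\<Sum>j<Nj. shifted_corr \<alpha> k (int j))"
  let ?tr = "mat_trace (mat_pow (cmv \<alpha>) k)" and ?M = "\<Sum>\<^sub>\<infinity> j\<in>{-1::int..}. main_term \<alpha> k j"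
  have "cmod (?tr - (- of_nat k * ?M)) \<le> cmod (?tr + of_nat k * G) + cmod (of_nat k * ?M - of_nat k * G)"
    using norm_triangle_ineq[of "?tr + of_nat k * G" "of_nat k * ?M - of_nat k * G"] by (simp add: algebra_simps)
  also have "\<dots> \<le> 11 * real k ^ 3 + 12963 * real k ^ 3 * S3"
    using trace_bulk_error[of \<alpha> Nj k, OF \<alpha> N] main_term_error[of \<alpha> Nj k, OF \<alpha> N] k unfolding G_def S3_def by fastforce
  also have "\<dots> \<le> 13000 * real k ^ 3 * (1 + S3)"
    by (simp add: algebra_simps S3_def sum_nonneg)
  also have "1 + S3 = (\<Sum>\<^sub>\<infinity> j\<in>{-1::int..}. cmod (alpha_ext \<alpha> j) ^ 3)"
    unfolding S3_def by (rule infsum_alpha_ext_cube[OF N, symmetric])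
  finally show "cmod (?tr - (- of_nat k * (\<Sum>\<^sub>\<infinity> j\<in>{-1::int..}.
                 cnj (alpha_ext \<alpha> j)
                 * (\<Prod>i\<in>{1..int k - 1}. complex_of_real ((rho (alpha_ext \<alpha> (j + i)))^2))
                 * alpha_ext \<alpha> (j + int k))))
     \<le> 13000 * real k ^ 3 * (\<Sum>\<^sub>\<infinity> j\<in>{-1::int..}. cmod (alpha_ext \<alpha> j) ^ 3)"
    by (simp only: main_term_def)
qed

end
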